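(* Let $f:\mathbb{R}^n\to\mathbb{R}$ be of class $C^{2+}$ with $L_f$-Lipschitz continuous gradient, let $g:\mathbb{R}^n\to\mathbb{R}\cup\{+\infty\}$ be proper, lower semicontinuous and $\rho$-weakly convex, let $\varphi=f+g$ with $\operatorname{argmin}\varphi\neq\emptyset$, and suppose $\{x:\varphi(x)\le\varphi(x^0)\}$ is bounded. Let $(x^k)_{k\in\mathbb N}$ be generated by the NTRA algorithm described in the context, and suppose that there is $\beta\in(0,1)$ such that for all $k$, $$m_k(0)-m_k(d^k)\ge\beta\|\nabla\varphi_\gamma(x^k)\|\min\Big\{\delta_k,\frac{\|\nabla\varphi_\gamma(x^k)\|}{\|B_k\|}\Big\}.$$ Then $\lim_{k\to\infty}\|\nabla\varphi_\gamma(x^k)\|=0$.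
   Context: $C^{2+}$: twice continuously differentiable with locally Lipschitz Hessian; $g$ is $\rho$-weakly convex if $g+\frac\rho2\|\cdot\|^2$ is convex. $\operatorname{prox}_{\gamma g}(x)=\operatorname{argmin}_z\{g(z)+\frac1{2\gamma}\|z-x\|^2\}$, $R_\gamma(x)=\gamma^{-1}(x-\operatorname{prox}_{\gamma g}(x-\gamma\nabla f(x)))$, forward-backward envelope $\varphi_\gamma(x)=\inf_u\{f(x)+\langle\nabla f(x),u-x\rangle+g(u)+\frac1{2\gamma}\|u-x\|^2\}$ (continuously differentiable here). $\partial_C$ denotes the Clarke generalized Jacobian. NTRA: given $x^0$, $\gamma\in(0,\min\{1/L_f,1/\rho\})$, $\delta_0>0$, $0<\mu_1<\mu_2<1$, $0<c_1<c_2<1<c_3$; for $k=0,1,\dots$: select $P_k\in\partial_C\operatorname{prox}_{\gamma g}(x^k-\gamma\nabla f(x^k))$; set $Q_k=I-\gamma\nabla^2f(x^k)$, $B_k=\gamma^{-1}Q_k(I-P_kQ_k)$; stop if $R_\gamma(x^k)=0$ and $\lambda_{\min}(B_k)\ge0$; let $d^k$ be an (approximate) solution of $\min_d m_k(d):=\varphi_\gamma(x^k)+\langle\nabla\varphi_\gamma(x^k),d\rangle+\frac12\langle B_kd,d\rangle$ s.t. $\|d\|\le\delta_k$; compute $\rho_k=\frac{\varphi_\gamma(x^k)-\varphi_\gamma(x^k+d^k)}{m_k(0)-m_k(d^k)}$; set $x^{k+1}=x^k$ if $\rho_k<\mu_1$, else $x^{k+1}=x^k+d^k$; update $\delta_{k+1}=c_1\delta_k$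 if $\rho_k<\mu_1$, $c_2\delta_k$ if $\mu_1\le\rho_k<\mu_2$, $c_3\delta_k$ if $\rho_k\ge\mu_2$. *)

theory Defs
  imports "HOL-Analysis.Analysis"
begin

type_synonym 'n mat = "real ^ 'n ^ 'n"

definition C2plus :: "(real ^ 'n \<Rightarrow> real) \<Rightarrow> (real ^ 'n \<Rightarrow> real ^ 'n)
    \<Rightarrow> (real ^ 'n \<Rightarrow> 'n::finite mat) \<Rightarrow> bool" where
  "C2plus f gf Hf \<longleftrightarrow>
     (\<forall>x. (f has_derivative (\<lambda>h. gf x \<bullet> h)) (at x)) \<and>
     (\<forall>x. (gf has_derivative (\<lambda>h. Hf x *v h)) (at x)) \<and>
     continuous_on UNIV Hf \<and>
     (\<forall>x. \<exists>e>0. \<exists>L. L-lipschitz_on (ball x e) Hf)"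

definition proper_fun :: "('a \<Rightarrow> ereal) \<Rightarrow> bool" where
  "proper_fun g \<longleftrightarrow> (\<forall>x. g x \<noteq> -\<infinity>) \<and> (\<exists>x. g x < \<infinity>)"

definition lsc_fun :: "('a::topological_space \<Rightarrow> ereal) \<Rightarrow> bool" where
  "lsc_fun g \<longleftrightarrow> (\<forall>x. g x \<le> Liminf (at x) g)"

text \<open>Convexity of an extended-real-valued function (with 0 * \<infinity> = 0).\<close>
definition ereal_convex :: "('a::real_vector \<Rightarrow> ereal) \<Rightarrow> bool" where
  "ereal_convex h \<longleftrightarrow> (\<forall>x y t. 0 \<le> t \<and> t \<le> 1 \<longrightarrow>
      h ((1 - t) *\<^sub>R x + t *\<^sub>R y) \<le> ereal (1 - t) * h x + ereal t * h y)"

definition weakly_convex :: "real \<Rightarrow> ('a::real_normed_vector \<Rightarrow> ereal) \<Rightarrow> bool" where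
  "weakly_convex \<rho> g \<longleftrightarrow> ereal_convex (\<lambda>x. g x + ereal (\<rho> / 2 * (norm x)\<^sup>2))"

definition prox :: "real \<Rightarrow> ('a::real_normed_vector \<Rightarrow> ereal) \<Rightarrow> 'a \<Rightarrow> 'a" where
  "prox \<gamma> g x = (THE z. \<forall>w. g z + ereal ((norm (z - x))\<^sup>2 / (2 * \<gamma>))
                          \<le> g w + ereal ((norm (w - x))\<^sup>2 / (2 * \<gamma>)))"

definition resid :: "real \<Rightarrow> (real ^ 'n \<Rightarrow> real ^ 'n) \<Rightarrow> (real ^ 'n \<Rightarrow> ereal)
    \<Rightarrow> real ^ 'n \<Rightarrow> real ^ 'n" where
  "resid \<gamma> gf g x = (1 / \<gamma>) *\<^sub>R (x - prox \<gamma> g (x - \<gamma> *\<^sub>R gf x))"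

text \<open>Forward-backward envelope (real-valued in the setting considered).\<close>
definition fbe :: "real \<Rightarrow> (real ^ 'n \<Rightarrow> real) \<Rightarrow> (real ^ 'n \<Rightarrow> real ^ 'n)
    \<Rightarrow> (real ^ 'n \<Rightarrow> ereal) \<Rightarrow> real ^ 'n \<Rightarrow> real" where
  "fbe \<gamma> f gf g x = real_of_ereal
     (INF u. ereal (f x + gf x \<bullet> (u - x) + (norm (u - x))\<^sup>2 / (2 * \<gamma>)) + g u)"

definition grad :: "(real ^ 'n \<Rightarrow> real) \<Rightarrow> real ^ 'n \<Rightarrow> real ^ 'n" where
  "grad F x = (THE D. (F has_derivative (\<lambda>h. D \<bullet> h)) (at x))"

definition clarke_jac :: "(real ^ 'n \<Rightarrow> real ^ 'n) \<Rightarrow> real ^ 'n \<Rightarrow> 'n::finite mat set" where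
  "clarke_jac F x = convex hull {M. \<exists>y J. (y \<longlonglongrightarrow> x) \<and> (J \<longlonglongrightarrow> M) \<and>
      (\<forall>i. (F has_derivative (\<lambda>h. J i *v h)) (at (y i)))}"

definition real_eigenvalues :: "'n::finite mat \<Rightarrow> real set" where
  "real_eigenvalues B = {l. \<exists>v. v \<noteq> 0 \<and> B *v v = l *\<^sub>R v}"

definition lambda_min :: "'n::finite mat \<Rightarrow> real" where
  "lambda_min B = Inf (real_eigenvalues B)"

definition mat_norm :: "'n::finite mat \<Rightarrow> real" where
  "mat_norm B = onorm (\<lambda>v. B *v v)"

definition tr_model :: "real \<Rightarrow> real ^ 'n \<Rightarrow> 'n::finite mat \<Rightarrow> real ^ 'n \<Rightarrow> real" where
  "tr_model phix gphix B d = phix + gphix \<bullet> d + (1/2) * ((B *v d) \<bullet> d)"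

text \<open>min{delta, a/b} with the convention a/0 = +\<infinity>.\<close>
definition min_ratio :: "real \<Rightarrow> real \<Rightarrow> real \<Rightarrow> real" where
  "min_ratio \<delta> a b = (if b = 0 then \<delta> else min \<delta> (a / b))"

definition Qmat :: "real \<Rightarrow> (real ^ 'n \<Rightarrow> 'n::finite mat) \<Rightarrow> real ^ 'n \<Rightarrow> 'n mat" where
  "Qmat \<gamma> Hf x = mat 1 - \<gamma> *\<^sub>R Hf x"

definition Bmat :: "real \<Rightarrow> (real ^ 'n \<Rightarrow> 'n::finite mat) \<Rightarrow> 'n mat \<Rightarrow> real ^ 'n \<Rightarrow> 'n mat" where
  "Bmat \<gamma> Hf P x = (1 / \<gamma>) *\<^sub>R (Qmat \<gamma> Hf x ** (mat 1 - P ** Qmat \<gamma> Hf x))"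

end

theory Submission
  imports Defs
begin

(* The proximal objective u \<mapsto> g u + |u - y|^2/(2\<gamma>) is strongly convex (weak convexity of g
   costs only \<rho> < 1/\<gamma> of its curvature) and coercive, so prox is single-valued and Lipschitz.
   Hence the Moreau envelope of g is C^1, and the forward-backward envelope \<phi>_\<gamma> is C^1 with
   gradient (I - \<gamma> \<nabla>^2 f) R_\<gamma>, bounded below by inf \<phi>, with bounded sublevel sets.
   NTRA is thus a trust-region method for \<phi>_\<gamma> whose iterates stay in a bounded sublevel set,
   where the model Hessians B_k are uniformly bounded. For such a method the Cauchy decrease makes
   every step with small radius very successful while the gradient is large, so the radii cannot
   collapse and the gradient has liminf 0. Since the values \<phi>_\<gamma>(x^k) decrease and converge,
   the iterates move only a little between an index where the gradient is large and the next one
   where it is small; uniform continuity of the gradient on the closure of the iterates then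
   rules out a positive limsup. *)

section \<open>Elementary estimates and lower semicontinuity\<close>

lemma descent_lemma:
  fixes f :: "'a::real_inner \<Rightarrow> real"
  assumes f_deriv: "\<And>x. (f has_derivative (\<lambda>h. gf x \<bullet> h)) (at x)"
    and gf_lip: "L-lipschitz_on UNIV gf"
  shows "f u \<le> f x + gf x \<bullet> (u - x) + L / 2 * (norm (u - x))\<^sup>2"
proof -
  define v where "v = u - x"
  define h where "h t = f (x + t *\<^sub>R v) - t * (gf x \<bullet> v) - L / 2 * t\<^sup>2 * (norm v)\<^sup>2" for t
  have h_deriv: "(h has_real_derivative (gf (x + t *\<^sub>R v) \<bullet> v - gf x \<bullet> v - L * t * (norm v)\<^sup>2)) (at t)"
    for t
  proof -
    have "((\<lambda>t. f (x + t *\<^sub>R v)) has_derivative (\<lambda>s. gf (x + t *\<^sub>R v) \<bullet> (s *\<^sub>R v))) (at t)"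
      by (rule has_derivative_compose[OF _ f_deriv]) (auto intro!: derivative_eq_intros)
    then have f_line: "((\<lambda>t. f (x + t *\<^sub>R v)) has_real_derivative (gf (x + t *\<^sub>R v) \<bullet> v)) (at t)"
      by (simp add: has_field_derivative_def mult_commute_abs)
    show ?thesis
      unfolding h_def by (rule derivative_eq_intros f_line | simp)+
  qed
  have "h 1 \<le> h 0"
  proof (rule DERIV_nonpos_imp_nonincreasing[of 0 1 h])
    fix t :: real assume t: "0 \<le> t" "t \<le> 1"
    have "gf (x + t *\<^sub>R v) \<bullet> v - gf x \<bullet> v \<le> norm (gf (x + t *\<^sub>R v) - gf x) * norm v"
      by (metis inner_diff_left norm_cauchy_schwarz)
    also have "\<dots> \<le> L * t * norm v * norm v"
      using lipschitz_onD[OF gf_lip, of "x + t *\<^sub>R v" x] t by (simp add: dist_norm mult_right_mono)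
    finally show "\<exists>y. (h has_real_derivative y) (at t) \<and> y \<le> 0"
      using h_deriv[of t] by (auto simp: power2_eq_square)
  qed simp
  then show ?thesis unfolding h_def v_def by simp
qed

lemma power2_norm_convex_combination:
  fixes a b :: "'a::real_inner"
  shows "(norm ((1 - t) *\<^sub>R a + t *\<^sub>R b))\<^sup>2
    = (1 - t) * (norm a)\<^sup>2 + t * (norm b)\<^sup>2 - t * (1 - t) * (norm (a - b))\<^sup>2"
  by (simp add: power2_norm_eq_inner inner_add_left inner_add_right inner_diff_left inner_diff_right
      inner_commute algebra_simps)

lemma power2_norm_diff_cross:
  fixes p p' y y' :: "'a::real_inner"
  shows "(norm (p' - y))\<^sup>2 - (norm (p - y))\<^sup>2 + (norm (p - y'))\<^sup>2 - (norm (p' - y'))\<^sup>2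
    = 2 * ((p - p') \<bullet> (y - y'))"
  by (simp add: power2_norm_eq_inner inner_diff_left inner_diff_right inner_commute algebra_simps)

lemma le_if_one_minus_mult_le:
  fixes a b :: real
  assumes "\<And>t. 0 < t \<Longrightarrow> t \<le> 1 \<Longrightarrow> (1 - t) * a \<le> b"
  shows "a \<le> b"
proof (rule ccontr)
  assume "\<not> a \<le> b"
  moreover have "0 \<le> b" using assms[of 1] by simp
  ultimately have "0 < (a - b) / (2 * a)" "(a - b) / (2 * a) \<le> 1" by (auto simp: field_simps)
  from assms[OF this] have "(a + b) / 2 \<le> b" using \<open>\<not> a \<le> b\<close> \<open>0 \<le> b\<close>
    by (simp add: field_simps)
  with \<open>\<not> a \<le> b\<close> show False by simp
qed

lemma quadratic_growth_bound:
  fixes a c C r :: real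
  assumes "0 < c" "0 \<le> r" "0 \<le> a" "c * r\<^sup>2 - a * r \<le> C"
  shows "r \<le> max 1 ((a + \<bar>C\<bar>) / c)"
proof (rule ccontr)
  assume "\<not> ?thesis"
  then have r1: "1 < r" and r2: "(a + \<bar>C\<bar>) / c < r" by auto
  from r2 have "\<bar>C\<bar> < c * r - a" using assms(1) by (simp add: field_simps)
  then have "r * \<bar>C\<bar> < r * (c * r - a)" using r1 by (simp add: mult_strict_left_mono)
  moreover have "\<bar>C\<bar> \<le> r * \<bar>C\<bar>" using r1 by (simp add: mult_le_cancel_right1)
  ultimately have "C < c * r\<^sup>2 - a * r" by (simp add: power2_eq_square algebra_simps)
  then show False using assms(4) by simp
qed

lemma lsc_fun_plus_continuous_limit_le:
  fixes g :: "'a::metric_space \<Rightarrow> ereal"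
  assumes g_lsc: "lsc_fun g" and q: "continuous_on UNIV q" and s: "s \<longlonglongrightarrow> u"
    and le: "\<And>n. g (s n) + ereal (q (s n)) \<le> ereal c"
  shows "g u + ereal (q u) \<le> ereal c"
proof (rule ccontr)
  assume "\<not> ?thesis"
  then have "ereal (c - q u) < g u" by (cases "g u") auto
  then obtain b where "ereal (c - q u) < ereal b" and b2: "ereal b < g u"
    using ereal_dense2 by blast
  then have b1: "c - q u < b" by simp
  have "ereal b < Liminf (at u) g"
    using g_lsc b2 unfolding lsc_fun_def by (meson order_less_le_trans)
  then have "eventually (\<lambda>y. ereal b < g y) (at u)"
    using le_Liminf_iff by blast
  then have "eventually (\<lambda>y. ereal b < g y) (nhds u)"
    using b2 by (simp add: eventually_nhds_conv_at)
  then have "eventually (\<lambda>n. ereal b < g (s n)) sequentially"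
    using s by (rule eventually_compose_filterlim)
  moreover have "eventually (\<lambda>n. c - b < q (s n)) sequentially"
    using continuous_on_tendsto_compose[OF q s] b1 by (auto intro: order_tendstoD(1))
  ultimately have "eventually (\<lambda>n. ereal c < g (s n) + ereal (q (s n))) sequentially"
  proof eventually_elim
    case (elim n) then show ?case by (cases "g (s n)") auto
  qed
  then obtain n where "ereal c < g (s n) + ereal (q (s n))"
    using eventually_happens'[OF sequentially_bot] by blast
  with le[of n] show False by simp
qed

lemma lsc_fun_plus_continuous_has_min:
  fixes g :: "'a::heine_borel \<Rightarrow> ereal"
  assumes g_lsc: "lsc_fun g" and q: "continuous_on UNIV q"
    and sublevel_bounded: "\<And>c. bounded {u. g u + ereal (q u) \<le> ereal c}"
    and bdd_below: "\<And>u. ereal lb \<le> g u + ereal (q u)"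
    and finite: "g u0 < \<infinity>"
  obtains p where "\<And>u. g p + ereal (q p) \<le> g u + ereal (q u)"
proof -
  define F where "F u = g u + ereal (q u)" for u
  have "(INF u. F u) \<le> F u0" by (rule INF_lower) simp
  moreover have "F u0 < \<infinity>" using finite by (cases "g u0") (auto simp: F_def)
  moreover have "ereal lb \<le> (INF u. F u)" using bdd_below by (auto simp: F_def intro: INF_greatest)
  ultimately obtain m where m: "(INF u. F u) = ereal m" by (cases "INF u. F u") auto
  have "(INF u. F u) < ereal (m + inverse (real (Suc n)))" for n using m by simp
  then have "\<exists>u. F u < ereal (m + inverse (real (Suc n)))" for n unfolding INF_less_iff by blast
  then obtain s where s: "\<And>n. F (s n) < ereal (m + inverse (real (Suc n)))" by metis
  have "F (s n) \<le> ereal (m + 1)" for n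
  proof -
    have "inverse (real (Suc n)) \<le> 1" by (simp add: inverse_le_1_iff)
    then show ?thesis using s[of n] by (simp add: order_trans[OF less_imp_le])
  qed
  then have "range s \<subseteq> {u. F u \<le> ereal (m + 1)}" by auto
  then have "bounded (range s)" using sublevel_bounded bounded_subset unfolding F_def by blast
  then obtain l r where r: "strict_mono r" "(s \<circ> r) \<longlonglongrightarrow> l"
    using bounded_imp_convergent_subsequence by blast
  have "F l \<le> ereal (m + inverse (real (Suc N)))" for N
  proof -
    have "(\<lambda>n. s (r (n + N))) \<longlonglongrightarrow> l"
      using LIMSEQ_ignore_initial_segment[OF r(2), of N] by (simp add: comp_def)
    moreover have "F (s (r (n + N))) \<le> ereal (m + inverse (real (Suc N)))" for n
    proof -
      have "N \<le> r (n + N)" using seq_suble[OF r(1), of "n + N"] by simp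
      then have "inverse (real (Suc (r (n + N)))) \<le> inverse (real (Suc N))"
        by (intro le_imp_inverse_le) auto
      then show ?thesis using s[of "r (n + N)"] by (simp add: order_trans[OF less_imp_le])
    qed
    ultimately show ?thesis unfolding F_def by (rule lsc_fun_plus_continuous_limit_le[OF g_lsc q])
  qed
  moreover obtain v where v: "F l = ereal v"
    using calculation[of 0] bdd_below[of l] by (cases "F l") (auto simp: F_def)
  ultimately have "v \<le> m"
    by (intro LIMSEQ_le_const[OF LIMSEQ_inverse_real_of_nat_add]) auto
  then have "F l \<le> ereal m" using v by simp
  then have "F l \<le> F u" for u using m INF_lower[of u UNIV F] by simp
  then show ?thesis using that unfolding F_def by blast
qed

lemma has_derivative_norm_le_lipschitz:
  fixes F :: "'a::real_normed_vector \<Rightarrow> 'b::real_normed_vector"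
  assumes d: "(F has_derivative F') (at y)" and L: "K-lipschitz_on UNIV F"
  shows "norm (F' h) \<le> K * norm h"
proof (cases "h = 0")
  case True
  then show ?thesis using linear_0[OF has_derivative_linear[OF d]] by simp
next
  case False
  then have nh: "0 < norm h" by simp
  have lin: "linear F'" using d by (rule has_derivative_linear)
  show ?thesis
  proof (rule field_le_epsilon)
    fix e :: real assume e: "0 < e"
    have "((\<lambda>y'. norm (F y' - F y - F' (y' - y)) / norm (y' - y)) \<longlongrightarrow> 0) (at y)"
      using d unfolding has_derivative_iff_norm by blast
    then have "eventually (\<lambda>y'. norm (F y' - F y - F' (y' - y)) / norm (y' - y) < e / norm h) (at y)"
      using e nh by (intro order_tendstoD(2)) auto
    then obtain r where r: "r > 0"
      "\<And>y'. y' \<noteq> y \<Longrightarrow> dist y' y < r \<Longrightarrow> norm (F y' - F y - F' (y' - y)) / norm (y' - y) < e / norm h"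
      unfolding eventually_at by auto
    define t where "t = r / (2 * norm h)"
    have t: "0 < t" "t * norm h < r" unfolding t_def using r nh by auto
    define y' where "y' = y + t *\<^sub>R h"
    have ny: "norm (y' - y) = t * norm h" unfolding y'_def using t by simp
    moreover have "y' \<noteq> y" using ny t nh by auto
    ultimately have "norm (F y' - F y - F' (y' - y)) / norm (y' - y) < e / norm h"
      using r(2)[of y'] t unfolding dist_norm by auto
    then have A: "norm (F y' - F y - t *\<^sub>R F' h) < e * t"
      using ny t nh unfolding y'_def by (simp add: linear_cmul[OF lin] field_simps)
    have B: "norm (F y' - F y) \<le> K * (t * norm h)"
      using lipschitz_onD[OF L, of y' y] ny by (simp add: dist_norm)
    have "norm (t *\<^sub>R F' h) \<le> norm (F y' - F y) + norm (F y' - F y - t *\<^sub>R F' h)"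
      using norm_triangle_ineq4[of "F y' - F y" "F y' - F y - t *\<^sub>R F' h"] by simp
    then have "t * norm (F' h) \<le> t * (K * norm h + e)"
      using A B t by (simp add: algebra_simps)
    then show "norm (F' h) \<le> K * norm h + e" using t by (simp add: mult_le_cancel_left_pos)
  qed
qed

section \<open>Operator norm of matrices and the Clarke Jacobian\<close>

lemma norm_mult_le_mat_norm: "norm (A *v v) \<le> mat_norm A * norm v"
  unfolding mat_norm_def by (rule onorm[OF matrix_vector_mul_bounded_linear])

lemma mat_norm_le: "(\<And>v. norm (A *v v) \<le> c * norm v) \<Longrightarrow> mat_norm A \<le> c"
  unfolding mat_norm_def by (rule onorm_le)

lemma mat_norm_nonneg: "0 \<le> mat_norm A"
  unfolding mat_norm_def by (rule onorm_pos_le[OF matrix_vector_mul_bounded_linear])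

lemma mat_norm_add_le: "mat_norm (A + B) \<le> mat_norm A + mat_norm B"
proof (rule mat_norm_le)
  fix v
  have "norm ((A + B) *v v) \<le> norm (A *v v) + norm (B *v v)"
    by (simp add: matrix_vector_mult_add_rdistrib norm_triangle_ineq)
  also have "\<dots> \<le> (mat_norm A + mat_norm B) * norm v"
    using norm_mult_le_mat_norm[of A v] norm_mult_le_mat_norm[of B v] by (simp add: distrib_right)
  finally show "norm ((A + B) *v v) \<le> (mat_norm A + mat_norm B) * norm v" .
qed

lemma mat_norm_scaleR_le: "mat_norm (c *\<^sub>R A) \<le> \<bar>c\<bar> * mat_norm A"
  by (rule mat_norm_le)
    (simp add: scaleR_matrix_vector_assoc[symmetric] mult.assoc mult_left_mono norm_mult_le_mat_norm)

lemma mat_norm_diff_le: "mat_norm (A - B) \<le> mat_norm A + mat_norm B"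
  using mat_norm_add_le[of A "(-1) *\<^sub>R B"] mat_norm_scaleR_le[of "-1" B] by simp

lemma mat_norm_mult_le: "mat_norm (A ** B) \<le> mat_norm A * mat_norm B"
proof (rule mat_norm_le)
  fix v
  have "norm ((A ** B) *v v) \<le> mat_norm A * norm (B *v v)"
    by (simp add: matrix_vector_mul_assoc[symmetric] norm_mult_le_mat_norm)
  also have "\<dots> \<le> mat_norm A * mat_norm B * norm v"
    by (simp add: mult.assoc mult_left_mono mat_norm_nonneg norm_mult_le_mat_norm)
  finally show "norm ((A ** B) *v v) \<le> mat_norm A * mat_norm B * norm v" .
qed

lemma mat_norm_one_le: "mat_norm (mat 1) \<le> 1"
  by (rule mat_norm_le) simp

lemma mat_norm_le_norm: "mat_norm (A :: 'n::finite mat) \<le> real CARD('n) * real CARD('n) * norm A"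
  unfolding mat_norm_def
proof (rule onorm_le_matrix_component)
  fix i j
  show "\<bar>A $ i $ j\<bar> \<le> norm A"
    using component_le_norm_cart[of "A $ i" j] Finite_Cartesian_Product.norm_nth_le[of A i] by simp
qed

lemma matrix_vector_mult_tendsto:
  fixes J :: "nat \<Rightarrow> real ^ 'n::finite ^ 'm::finite"
  assumes "J \<longlonglongrightarrow> M"
  shows "(\<lambda>i. J i *v v) \<longlonglongrightarrow> M *v v"
  unfolding matrix_vector_mult_def
  by (intro tendsto_vec_lambda tendsto_sum tendsto_mult tendsto_const tendsto_vec_nth assms)

lemma continuous_on_vector_matrix_mult [continuous_intros]:
  assumes "continuous_on S v" "continuous_on S A"
  shows "continuous_on S (\<lambda>x. (v x :: real ^ 'm::finite) v* (A x :: real ^ 'k::finite ^ 'm))"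
  unfolding vector_matrix_mult_def
  by (intro continuous_intros continuous_on_vec_lambda continuous_on_component assms)

lemma clarke_jac_mat_norm_le:
  fixes F :: "real ^ 'n::finite \<Rightarrow> real ^ 'n"
  assumes L: "K-lipschitz_on UNIV F" and P: "P \<in> clarke_jac F x"
  shows "mat_norm P \<le> K"
proof -
  have "convex {M :: 'n mat. mat_norm M \<le> K}"
  proof (rule convexI)
    fix A B :: "'n mat" and u w :: real
    assume "A \<in> {M. mat_norm M \<le> K}" "B \<in> {M. mat_norm M \<le> K}" "0 \<le> u" "0 \<le> w" "u + w = 1"
    then have "u * mat_norm A + w * mat_norm B \<le> u * K + w * K"
      by (intro add_mono mult_left_mono) auto
    then show "u *\<^sub>R A + w *\<^sub>R B \<in> {M. mat_norm M \<le> K}"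
      using mat_norm_add_le[of "u *\<^sub>R A" "w *\<^sub>R B"] mat_norm_scaleR_le[of u A]
        mat_norm_scaleR_le[of w B] \<open>0 \<le> u\<close> \<open>0 \<le> w\<close> \<open>u + w = 1\<close>
      by (simp add: distrib_right[symmetric])
  qed
  moreover have "{M. \<exists>y J. (y \<longlonglongrightarrow> x) \<and> (J \<longlonglongrightarrow> M) \<and> (\<forall>i. (F has_derivative (\<lambda>h. J i *v h)) (at (y i)))}
      \<subseteq> {M. mat_norm M \<le> K}"
  proof (clarify, rule mat_norm_le)
    fix M y J v
    assume J: "J \<longlonglongrightarrow> M" and D: "\<forall>i. (F has_derivative (\<lambda>h. J i *v h)) (at (y i))"
    show "norm (M *v v) \<le> K * norm v"
    proof (rule Lim_norm_ubound[OF _ matrix_vector_mult_tendsto[OF J]])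
      show "\<forall>\<^sub>F i in sequentially. norm (J i *v v) \<le> K * norm v"
        using has_derivative_norm_le_lipschitz[OF D[rule_format] L] by simp
    qed simp
  qed
  ultimately have "clarke_jac F x \<subseteq> {M. mat_norm M \<le> K}"
    unfolding clarke_jac_def by (rule hull_minimal[rotated])
  with P show ?thesis by blast
qed

lemma grad_eqI:
  assumes "(F has_derivative (\<lambda>h. D \<bullet> h)) (at x)"
  shows "grad F x = D"
  unfolding grad_def
proof (rule the_equality)
  fix D' assume "(F has_derivative (\<lambda>h. D' \<bullet> h)) (at x)"
  from has_derivative_unique[OF this assms] have "D' \<bullet> (D' - D) = D \<bullet> (D' - D)" by metis
  then have "(D' - D) \<bullet> (D' - D) = 0" by (simp add: inner_diff_left)
  then show "D' = D" by simp
qed (rule assms)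

section \<open>Convergence of trust-region methods\<close>

lemma uniform_linearization:
  fixes \<phi> :: "'a::euclidean_space \<Rightarrow> real"
  assumes deriv: "\<And>y. (\<phi> has_derivative (\<lambda>h. G y \<bullet> h)) (at y)"
    and cont: "continuous_on UNIV G" and S: "bounded S" and \<tau>: "0 < \<tau>"
  obtains \<eta> where "0 < \<eta>"
    "\<And>y v. y \<in> S \<Longrightarrow> norm v \<le> \<eta> \<Longrightarrow> \<bar>\<phi> (y + v) - \<phi> y - G y \<bullet> v\<bar> \<le> \<tau> * norm v"
proof -
  obtain R where R: "\<And>y. y \<in> S \<Longrightarrow> norm y \<le> R" using S unfolding bounded_iff by blast
  define K where "K = cball (0::'a) (R + 1)"
  have "uniformly_continuous_on K G"
    unfolding K_def by (rule compact_uniformly_continuous[OF continuous_on_subset[OF cont]]) auto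
  then obtain r where r: "0 < r"
    "\<And>z y. z \<in> K \<Longrightarrow> y \<in> K \<Longrightarrow> dist y z < r \<Longrightarrow> dist (G y) (G z) < \<tau>"
    using \<tau> unfolding uniformly_continuous_on_def by metis
  define \<eta> where "\<eta> = min 1 (r / 2)"
  have \<eta>: "0 < \<eta>" "\<eta> \<le> 1" "\<eta> < r" using r(1) by (auto simp: \<eta>_def)
  have "\<bar>\<phi> (y + v) - \<phi> y - G y \<bullet> v\<bar> \<le> \<tau> * norm v" if y: "y \<in> S" and v: "norm v \<le> \<eta>" for y v
  proof -
    have "norm (\<phi> (y + v) - \<phi> y - G y \<bullet> (y + v - y)) \<le> norm (y + v - y) * \<tau>"
    proof (rule differentiable_bound_linearization[where S = "cball y \<eta>" and f' = "\<lambda>z h. G z \<bullet> h"])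
      fix t :: real assume "t \<in> {0..1}"
      then have "norm (t *\<^sub>R v) \<le> \<eta>" using v by (auto intro: order_trans[OF mult_left_le_one_le])
      then show "y + t *\<^sub>R (y + v - y) \<in> cball y \<eta>" by (simp add: dist_norm)
    next
      fix z assume z: "z \<in> cball y \<eta>"
      show "(\<phi> has_derivative (\<lambda>h. G z \<bullet> h)) (at z within cball y \<eta>)"
        using deriv by (rule has_derivative_at_withinI)
      have "norm z \<le> norm y + dist y z" using norm_triangle_ineq2[of z y] by (simp add: dist_norm norm_minus_commute)
      then have "z \<in> K" "y \<in> K" using R[OF y] z \<eta> by (auto simp: K_def)
      moreover have "dist z y < r" using z \<eta> by (simp add: dist_commute)
      ultimately have Gzy: "norm (G z - G y) \<le> \<tau>" using r(2)[of y z] by (simp add: dist_norm)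
      show "onorm ((\<lambda>h. G z \<bullet> h) - (\<lambda>h. G y \<bullet> h)) \<le> \<tau>"
      proof (rule onorm_le)
        fix h
        have "norm (((\<lambda>h. G z \<bullet> h) - (\<lambda>h. G y \<bullet> h)) h) = \<bar>(G z - G y) \<bullet> h\<bar>"
          by (simp add: inner_diff_left)
        also have "\<dots> \<le> norm (G z - G y) * norm h" by (rule Cauchy_Schwarz_ineq2)
        also have "\<dots> \<le> \<tau> * norm h" using Gzy by (simp add: mult_right_mono)
        finally show "norm (((\<lambda>h. G z \<bullet> h) - (\<lambda>h. G y \<bullet> h)) h) \<le> \<tau> * norm h" .
      qed
    qed (use \<eta> in auto)
    then show ?thesis by (simp add: mult.commute)
  qed
  with \<eta>(1) that show ?thesis by blast
qed

locale trust_region =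
  fixes \<phi> :: "real ^ 'n::finite \<Rightarrow> real" and G :: "real ^ 'n \<Rightarrow> real ^ 'n"
    and B :: "nat \<Rightarrow> 'n mat" and x d :: "nat \<Rightarrow> real ^ 'n" and \<delta> :: "nat \<Rightarrow> real"
    and model_decrease ratio :: "nat \<Rightarrow> real" and \<mu>1 \<mu>2 c1 c2 c3 \<beta> :: real
  assumes model_decrease_eq: "\<And>k. model_decrease k =
      tr_model (\<phi> (x k)) (G (x k)) (B k) 0 - tr_model (\<phi> (x k)) (G (x k)) (B k) (d k)"
    and ratio_eq: "\<And>k. ratio k = (\<phi> (x k) - \<phi> (x k + d k)) / model_decrease k"
    and step_le_radius: "\<And>k. norm (d k) \<le> \<delta> k"
    and cauchy_decrease: "\<And>k. \<beta> * norm (G (x k)) * min_ratio (\<delta> k) (norm (G (x k))) (mat_norm (B k))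
      \<le> model_decrease k"
    and x_Suc: "\<And>k. x (Suc k) = (if ratio k < \<mu>1 then x k else x k + d k)"
    and radius_Suc: "\<And>k. \<delta> (Suc k) =
      (if ratio k < \<mu>1 then c1 * \<delta> k else if ratio k < \<mu>2 then c2 * \<delta> k else c3 * \<delta> k)"
    and radius_0: "0 < \<delta> 0"
    and \<mu>: "0 < \<mu>1" "\<mu>1 < \<mu>2" "\<mu>2 < 1"
    and c: "0 < c1" "c1 < c2" "c2 < 1" "1 < c3"
    and \<beta>: "0 < \<beta>"
begin

lemma radius_pos: "0 < \<delta> k"
  by (induction k) (use radius_0 c in \<open>auto simp: radius_Suc\<close>)

lemma radius_Suc_ge: "c1 * \<delta> k \<le> \<delta> (Suc k)"
  using radius_pos[of k] c by (auto simp: radius_Suc)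

lemma radius_Suc_rejected: "ratio k < \<mu>1 \<Longrightarrow> \<delta> (Suc k) = c1 * \<delta> k"
  by (simp add: radius_Suc)

lemma radius_Suc_very_successful: "\<mu>2 \<le> ratio k \<Longrightarrow> \<delta> k \<le> \<delta> (Suc k)"
  using radius_pos[of k] \<mu> c by (simp add: radius_Suc)

lemma model_decrease_nonneg: "0 \<le> model_decrease k"
proof -
  have "0 \<le> min_ratio (\<delta> k) (norm (G (x k))) (mat_norm (B k))"
    using radius_pos[of k] mat_norm_nonneg[of "B k"] by (simp add: min_ratio_def)
  then show ?thesis
    using cauchy_decrease[of k] \<beta> by (meson mult_nonneg_nonneg norm_ge_zero less_imp_le order_trans)
qed

lemma step_rejected: "ratio k < \<mu>1 \<Longrightarrow> x (Suc k) = x k"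
  by (simp add: x_Suc)

text \<open>A vanishing model decrease gives ratio 0 (as x / 0 = 0), so such a step is rejected.\<close>

lemma step_accepted:
  assumes "\<not> ratio k < \<mu>1"
  shows "x (Suc k) = x k + d k" and "\<mu>1 * model_decrease k \<le> \<phi> (x k) - \<phi> (x (Suc k))"
proof -
  show xs: "x (Suc k) = x k + d k" using assms by (simp add: x_Suc)
  have pos: "0 < model_decrease k"
    using assms model_decrease_nonneg[of k] \<mu>(1) by (auto simp: ratio_eq order_le_less)
  show "\<mu>1 * model_decrease k \<le> \<phi> (x k) - \<phi> (x (Suc k))"
    using assms unfolding xs ratio_eq not_less pos_le_divide_eq[OF pos] by (simp add: mult.commute)
qed

lemma very_successful_if_accurate:
  assumes "0 < c" "c \<le> model_decrease k"
    and "- ((1 - \<mu>2) * c) \<le> \<phi> (x k) - \<phi> (x k + d k) - model_decrease k"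
  shows "\<mu>2 \<le> ratio k"
proof -
  have "(1 - \<mu>2) * c \<le> (1 - \<mu>2) * model_decrease k" using assms(2) \<mu> by (intro mult_left_mono) auto
  then have "\<mu>2 * model_decrease k \<le> \<phi> (x k) - \<phi> (x k + d k)"
    using assms(3) by (simp add: algebra_simps)
  moreover have "0 < model_decrease k" using assms(1,2) by linarith
  ultimately show ?thesis by (simp add: ratio_eq le_divide_eq)
qed

lemma value_Suc_le: "\<phi> (x (Suc k)) \<le> \<phi> (x k)"
proof (cases "ratio k < \<mu>1")
  case False
  have "0 \<le> \<mu>1 * model_decrease k" using \<mu>(1) model_decrease_nonneg[of k] by simp
  with step_accepted(2)[OF False] show ?thesis by linarith
qed (simp add: step_rejected)

lemma values_decseq: "decseq (\<lambda>k. \<phi> (x k))"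
  using value_Suc_le by (rule decseq_SucI)

lemma value_le_initial: "\<phi> (x k) \<le> \<phi> (x 0)"
  using values_decseq by (simp add: decseq_def)

end

locale trust_region_bounded = trust_region +
  fixes M :: real
  assumes has_grad: "\<And>y. (\<phi> has_derivative (\<lambda>h. G y \<bullet> h)) (at y)"
    and grad_cont: "continuous_on UNIV G"
    and values_bdd_below: "bdd_below (range (\<lambda>k. \<phi> (x k)))"
    and iterates_bounded: "bounded (range x)"
    and model_norm_le: "\<And>k. mat_norm (B k) \<le> M"
    and M_pos: "0 < M"
begin

lemma model_decrease_ge: "\<beta> * norm (G (x k)) * min (\<delta> k) (norm (G (x k)) / M) \<le> model_decrease k"
proof -
  have "min (\<delta> k) (norm (G (x k)) / M) \<le> min_ratio (\<delta> k) (norm (G (x k))) (mat_norm (B k))"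
  proof (cases "mat_norm (B k) = 0")
    case False
    then have "norm (G (x k)) / M \<le> norm (G (x k)) / mat_norm (B k)"
      using model_norm_le[of k] mat_norm_nonneg[of "B k"] by (intro divide_left_mono) auto
    then show ?thesis using False by (auto simp: min_ratio_def)
  qed (simp add: min_ratio_def)
  then show ?thesis
    using cauchy_decrease[of k] \<beta> by (meson less_imp_le mult_left_mono mult_nonneg_nonneg norm_ge_zero order_trans)
qed

lemma model_curvature_le: "\<bar>(B k *v v) \<bullet> v\<bar> \<le> M * (norm v)\<^sup>2"
proof -
  have "\<bar>(B k *v v) \<bullet> v\<bar> \<le> norm (B k *v v) * norm v" by (rule Cauchy_Schwarz_ineq2)
  also have "\<dots> \<le> M * norm v * norm v"
    using norm_mult_le_mat_norm[of "B k" v] model_norm_le[of k]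
    by (meson mult_right_mono norm_ge_zero order_trans)
  finally show ?thesis by (simp add: power2_eq_square mult.assoc)
qed

lemma values_Cauchy: "Cauchy (\<lambda>k. \<phi> (x k))"
proof -
  obtain lb where "\<forall>k. lb \<le> \<phi> (x k)" using values_bdd_below by (auto simp: bdd_below_def)
  with values_decseq obtain L where "(\<lambda>k. \<phi> (x k)) \<longlonglongrightarrow> L" by (rule decseq_convergent)
  then show ?thesis by (rule LIMSEQ_imp_Cauchy)
qed

lemma very_successful_if_small_radius:
  assumes "0 < \<epsilon>"
  obtains \<eta> where "0 < \<eta>" "\<And>k. \<epsilon> \<le> norm (G (x k)) \<Longrightarrow> \<delta> k \<le> \<eta> \<Longrightarrow> \<mu>2 \<le> ratio k"
proof -
  define \<tau> where "\<tau> = (1 - \<mu>2) * \<beta> * \<epsilon> / 2"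
  have \<tau>: "0 < \<tau>" using \<mu> \<beta> assms by (simp add: \<tau>_def)
  then obtain \<eta>0 where \<eta>0: "0 < \<eta>0"
    "\<And>y v. y \<in> range x \<Longrightarrow> norm v \<le> \<eta>0 \<Longrightarrow> \<bar>\<phi> (y + v) - \<phi> y - G y \<bullet> v\<bar> \<le> \<tau> * norm v"
    using uniform_linearization[OF has_grad grad_cont iterates_bounded] by metis
  define \<eta> where "\<eta> = min \<eta>0 (min (2 * \<tau> / M) (\<epsilon> / M))"
  have "\<mu>2 \<le> ratio k" if large: "\<epsilon> \<le> norm (G (x k))" and small: "\<delta> k \<le> \<eta>" for k
  proof -
    have dk: "norm (d k) \<le> \<delta> k" "\<delta> k \<le> \<eta>0" "M * \<delta> k \<le> 2 * \<tau>" "\<delta> k \<le> \<epsilon> / M"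
      using step_le_radius[of k] small M_pos by (auto simp: \<eta>_def field_simps)
    have lin: "\<bar>\<phi> (x k + d k) - \<phi> (x k) - G (x k) \<bullet> d k\<bar> \<le> \<tau> * \<delta> k"
      using \<eta>0(2)[of "x k" "d k"] dk(1,2) \<tau> by (meson order_trans rangeI mult_left_mono less_imp_le)
    have "(norm (d k))\<^sup>2 \<le> \<delta> k * \<delta> k"
      using mult_mono[OF dk(1) dk(1)] radius_pos[of k] by (simp add: power2_eq_square)
    then have "M * (norm (d k))\<^sup>2 \<le> M * \<delta> k * \<delta> k"
      using M_pos by (simp add: mult.assoc mult_left_mono)
    also have "\<dots> \<le> 2 * \<tau> * \<delta> k" using dk(3) radius_pos[of k] by (simp add: mult_right_mono)
    finally have quad: "\<bar>(B k *v d k) \<bullet> d k\<bar> \<le> 2 * \<tau> * \<delta> k"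
      using model_curvature_le[of k "d k"] by linarith
    have "\<epsilon> / M \<le> norm (G (x k)) / M" using large M_pos by (simp add: divide_right_mono)
    then have "\<beta> * norm (G (x k)) * \<delta> k \<le> model_decrease k"
      using model_decrease_ge[of k] dk(4) by (simp add: min_def split: if_splits)
    moreover have "\<beta> * \<epsilon> * \<delta> k \<le> \<beta> * norm (G (x k)) * \<delta> k"
      using large \<beta> radius_pos[of k] by (simp add: mult_right_mono)
    ultimately have "\<beta> * \<epsilon> * \<delta> k \<le> model_decrease k" by linarith
    moreover have "0 < \<beta> * \<epsilon> * \<delta> k" using \<beta> assms radius_pos[of k] by simp
    moreover have "\<phi> (x k) - \<phi> (x k + d k) - model_decrease k
        = - (\<phi> (x k + d k) - \<phi> (x k) - G (x k) \<bullet> d k) + 1 / 2 * ((B k *v d k) \<bullet> d k)"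
      by (simp add: model_decrease_eq tr_model_def)
    moreover have "2 * \<tau> * \<delta> k = 2 * (\<tau> * \<delta> k)" "2 * \<tau> * \<delta> k = (1 - \<mu>2) * (\<beta> * \<epsilon> * \<delta> k)"
      by (simp_all add: \<tau>_def)
    ultimately show ?thesis
      using abs_le_D1[OF lin] abs_le_D2[OF quad]
      by (intro very_successful_if_accurate[where c = "\<beta> * \<epsilon> * \<delta> k"]) linarith+
  qed
  moreover have "0 < \<eta>" using \<eta>0(1) \<tau> assms M_pos by (simp add: \<eta>_def)
  ultimately show ?thesis using that by blast
qed

lemma radius_bounded_below:
  assumes "0 < \<epsilon>" and large: "\<And>k. K \<le> k \<Longrightarrow> \<epsilon> \<le> norm (G (x k))"
  obtains r where "0 < r" "\<And>j. r \<le> \<delta> (K + j)"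
proof -
  obtain \<eta> where \<eta>: "0 < \<eta>" "\<And>k. \<epsilon> \<le> norm (G (x k)) \<Longrightarrow> \<delta> k \<le> \<eta> \<Longrightarrow> \<mu>2 \<le> ratio k"
    using very_successful_if_small_radius[OF assms(1)] by blast
  define r where "r = min (\<delta> K) (c1 * \<eta>)"
  have "r \<le> \<delta> (K + j)" for j
  proof (induction j)
    case 0
    show ?case by (simp add: r_def)
  next
    case (Suc j)
    show ?case
    proof (cases "\<delta> (K + j) \<le> \<eta>")
      case True
      then have "\<delta> (K + j) \<le> \<delta> (Suc (K + j))"
        using \<eta>(2) large radius_Suc_very_successful by simp
      with Suc.IH show ?thesis by simp
    next
      case False
      then have "r \<le> c1 * \<delta> (K + j)" using c(1) by (simp add: r_def min.coboundedI2)
      with radius_Suc_ge[of "K + j"] show ?thesis by simp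
    qed
  qed
  moreover have "0 < r" using radius_pos c(1) \<eta>(1) by (simp add: r_def)
  ultimately show ?thesis using that by blast
qed

lemma grad_liminf_zero:
  assumes "0 < \<epsilon>"
  shows "\<exists>k\<ge>K. norm (G (x k)) < \<epsilon>"
proof (rule ccontr)
  assume "\<not> ?thesis"
  then have large: "\<And>k. K \<le> k \<Longrightarrow> \<epsilon> \<le> norm (G (x k))" by (simp add: not_less)
  obtain r where r: "0 < r" "\<And>j. r \<le> \<delta> (K + j)"
    using radius_bounded_below[OF assms large] by blast
  define D where "D = \<mu>1 * (\<beta> * \<epsilon> * min r (\<epsilon> / M))"
  have "0 < D" using \<mu> \<beta> assms r M_pos by (simp add: D_def)
  then obtain N where N: "\<forall>m\<ge>N. \<forall>n\<ge>N. norm (\<phi> (x m) - \<phi> (x n)) < D"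
    using CauchyD[OF values_Cauchy] by blast
  define N' where "N' = max N K"
  have rejected: "ratio k < \<mu>1" if "N' \<le> k" for k
  proof (rule ccontr)
    assume acc: "\<not> ratio k < \<mu>1"
    have "r \<le> \<delta> k" using r(2)[of "k - K"] that by (simp add: N'_def)
    moreover have "\<epsilon> / M \<le> norm (G (x k)) / M"
      using large[of k] that M_pos by (simp add: N'_def divide_right_mono)
    ultimately have "min r (\<epsilon> / M) \<le> min (\<delta> k) (norm (G (x k)) / M)" by (rule min.mono)
    then have "\<beta> * \<epsilon> * min r (\<epsilon> / M) \<le> \<beta> * norm (G (x k)) * min (\<delta> k) (norm (G (x k)) / M)"
      using large[of k] that \<beta> assms r M_pos by (intro mult_mono mult_left_mono) (auto simp: N'_def)
    then have "D \<le> \<phi> (x k) - \<phi> (x (Suc k))"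
      using model_decrease_ge[of k] step_accepted(2)[OF acc] \<mu>(1) unfolding D_def
      by (meson mult_left_mono less_imp_le order_trans)
    moreover have "norm (\<phi> (x k) - \<phi> (x (Suc k))) < D" using N that by (simp add: N'_def)
    ultimately show False by simp
  qed
  have geometric: "\<delta> (N' + j) = c1 ^ j * \<delta> N'" for j
    by (induction j) (simp_all add: radius_Suc_rejected rejected)
  obtain j where "c1 ^ j < r / \<delta> N'"
    using real_arch_pow_inv[of "r / \<delta> N'" c1] r(1) radius_pos[of N'] c by auto
  moreover have "r \<le> \<delta> (N' + j)" using r(2)[of "N' - K + j"] by (simp add: N'_def)
  ultimately show False using radius_pos[of N'] by (simp add: geometric field_simps)
qed

lemma value_decrease_ge:
  "\<mu>1 * \<beta> * norm (G (x k)) * min (norm (x (Suc k) - x k)) (norm (G (x k)) / M)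
    \<le> \<phi> (x k) - \<phi> (x (Suc k))"
proof (cases "ratio k < \<mu>1")
  case True
  then show ?thesis using M_pos by (simp add: step_rejected)
next
  case False
  have "min (norm (x (Suc k) - x k)) (norm (G (x k)) / M) \<le> min (\<delta> k) (norm (G (x k)) / M)"
    using step_accepted(1)[OF False] step_le_radius[of k] by auto
  then have "\<beta> * norm (G (x k)) * min (norm (x (Suc k) - x k)) (norm (G (x k)) / M) \<le> model_decrease k"
    using model_decrease_ge[of k] \<beta> by (meson less_imp_le mult_left_mono mult_nonneg_nonneg norm_ge_zero order_trans)
  then show ?thesis
    using step_accepted(2)[OF False] \<mu>(1) by (simp add: mult.assoc) (meson less_imp_le mult_left_mono order_trans)
qed

lemma iterates_close_on_block:
  assumes "0 < \<epsilon>" "0 < t" "m \<le> l"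
    and large: "\<And>k. m \<le> k \<Longrightarrow> k < l \<Longrightarrow> \<epsilon> \<le> norm (G (x k))"
    and close: "\<phi> (x m) - \<phi> (x l) < \<mu>1 * \<beta> * \<epsilon> * min t (\<epsilon> / M)"
  shows "norm (x l - x m) < t"
proof -
  define a where "a k = min (norm (x (Suc k) - x k)) (\<epsilon> / M)" for k
  have a_nonneg: "0 \<le> a k" for k using assms(1) M_pos by (simp add: a_def)
  have "\<mu>1 * \<beta> * \<epsilon> * a k \<le> \<phi> (x k) - \<phi> (x (Suc k))" if "m \<le> k" "k < l" for k
  proof -
    have "\<epsilon> / M \<le> norm (G (x k)) / M" using large[OF that] M_pos by (simp add: divide_right_mono)
    then have "a k \<le> min (norm (x (Suc k) - x k)) (norm (G (x k)) / M)"
      unfolding a_def by (intro min.mono) auto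
    then have "\<mu>1 * \<beta> * \<epsilon> * a k \<le> \<mu>1 * \<beta> * norm (G (x k)) * min (norm (x (Suc k) - x k)) (norm (G (x k)) / M)"
      using large[OF that] \<mu> \<beta> assms(1) a_nonneg[of k] by (intro mult_mono mult_left_mono) auto
    with value_decrease_ge[of k] show ?thesis by linarith
  qed
  then have "\<mu>1 * \<beta> * \<epsilon> * (\<Sum>k = m..<l. a k) \<le> (\<Sum>k = m..<l. \<phi> (x k) - \<phi> (x (Suc k)))"
    unfolding sum_distrib_left by (intro sum_mono) auto
  also have "\<dots> = \<phi> (x m) - \<phi> (x l)"
    using sum_Suc_diff'[OF assms(3), of "\<lambda>k. - \<phi> (x k)"] by simp
  finally have "\<mu>1 * \<beta> * \<epsilon> * (\<Sum>k = m..<l. a k) < \<mu>1 * \<beta> * \<epsilon> * min t (\<epsilon> / M)"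
    using close by linarith
  then have sum_a: "(\<Sum>k = m..<l. a k) < min t (\<epsilon> / M)"
    using \<mu> \<beta> assms(1) by (simp add: mult_less_cancel_left_pos)
  have "a k = norm (x (Suc k) - x k)" if "k \<in> {m..<l}" for k
  proof -
    have "a k \<le> (\<Sum>k = m..<l. a k)" using that a_nonneg by (intro member_le_sum) auto
    with sum_a show ?thesis unfolding a_def by auto
  qed
  then have "norm (x l - x m) \<le> (\<Sum>k = m..<l. a k)"
    using sum_Suc_diff'[OF assms(3), of x] norm_sum[of "\<lambda>k. x (Suc k) - x k" "{m..<l}"] by simp
  with sum_a show ?thesis by simp
qed

theorem grad_tendsto_zero: "(\<lambda>k. norm (G (x k))) \<longlonglongrightarrow> 0"
proof (rule ccontr)
  assume "\<not> ?thesis"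
  then obtain e where e: "0 < e" "\<And>N. \<exists>m\<ge>N. e \<le> norm (G (x m))"
    unfolding lim_sequentially by (auto simp: not_less)
  define \<epsilon> where "\<epsilon> = e / 2"
  have \<epsilon>: "0 < \<epsilon>" using e(1) by (simp add: \<epsilon>_def)
  have "uniformly_continuous_on (closure (range x)) G"
    using iterates_bounded by (intro compact_uniformly_continuous continuous_on_subset[OF grad_cont]) auto
  then obtain t where t: "0 < t" "\<forall>y\<in>closure (range x). \<forall>y'\<in>closure (range x).
      dist y' y < t \<longrightarrow> dist (G y') (G y) < \<epsilon>"
    using \<epsilon> unfolding uniformly_continuous_on_def by blast
  have x_closure: "x k \<in> closure (range x)" for k by (rule closure_subset[THEN subsetD]) simp
  have "0 < \<mu>1 * \<beta> * \<epsilon> * min t (\<epsilon> / M)" using \<mu> \<beta> \<epsilon> t(1) M_pos by simp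
  then obtain N where N: "\<forall>m\<ge>N. \<forall>n\<ge>N. norm (\<phi> (x m) - \<phi> (x n)) < \<mu>1 * \<beta> * \<epsilon> * min t (\<epsilon> / M)"
    using CauchyD[OF values_Cauchy] by blast
  obtain m where m: "N \<le> m" "2 * \<epsilon> \<le> norm (G (x m))" using e(2) by (auto simp: \<epsilon>_def)
  define l where "l = (LEAST k. m \<le> k \<and> norm (G (x k)) < \<epsilon>)"
  have "\<exists>k. m \<le> k \<and> norm (G (x k)) < \<epsilon>" using grad_liminf_zero[OF \<epsilon>] by blast
  then have l: "m \<le> l \<and> norm (G (x l)) < \<epsilon>" unfolding l_def by (rule LeastI_ex)
  have large: "\<epsilon> \<le> norm (G (x k))" if "m \<le> k" "k < l" for k
    using not_less_Least[of k "\<lambda>k. m \<le> k \<and> norm (G (x k)) < \<epsilon>"] that unfolding l_def by auto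
  have "norm (\<phi> (x m) - \<phi> (x l)) < \<mu>1 * \<beta> * \<epsilon> * min t (\<epsilon> / M)"
    using N m(1) l by auto
  then have "norm (x l - x m) < t"
    using iterates_close_on_block[OF \<epsilon> t(1) conjunct1[OF l] large] by (simp add: abs_less_iff)
  then have "norm (G (x l) - G (x m)) < \<epsilon>" using t(2) x_closure by (simp add: dist_norm)
  then show False using l m(2) norm_triangle_ineq2[of "G (x m)" "G (x l)"] by (simp add: norm_minus_commute)
qed

end

section \<open>Proximal map and forward-backward envelope\<close>

locale forward_backward =
  fixes f :: "real ^ 'n::finite \<Rightarrow> real" and gf :: "real ^ 'n \<Rightarrow> real ^ 'n"
    and Hf :: "real ^ 'n \<Rightarrow> 'n mat" and g :: "real ^ 'n \<Rightarrow> ereal"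
    and Lf \<rho> \<gamma> :: real
  assumes f_C2: "C2plus f gf Hf"
    and gf_lip: "Lf-lipschitz_on UNIV gf"
    and g_proper: "proper_fun g"
    and g_lsc: "lsc_fun g"
    and g_wc: "weakly_convex \<rho> g"
    and argmin_ne: "\<exists>z. \<forall>y. ereal (f z) + g z \<le> ereal (f y) + g y"
    and \<gamma>_pos: "0 < \<gamma>" and \<gamma>_Lf: "\<gamma> * Lf < 1" and \<gamma>_\<rho>: "\<gamma> * \<rho> < 1"
begin

lemma f_deriv: "(f has_derivative (\<lambda>h. gf x \<bullet> h)) (at x)"
  using f_C2 unfolding C2plus_def by blast

lemma gf_deriv: "(gf has_derivative (\<lambda>h. Hf x *v h)) (at x)"
  using f_C2 unfolding C2plus_def by blast

lemma Hf_cont: "continuous_on UNIV Hf"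
  using f_C2 unfolding C2plus_def by blast

lemma gf_cont: "continuous_on UNIV gf"
  using gf_lip by (rule lipschitz_on_continuous_on)

lemma f_descent: "f u \<le> f x + gf x \<bullet> (u - x) + Lf / 2 * (norm (u - x))\<^sup>2"
  using f_deriv gf_lip by (rule descent_lemma)

lemma g_not_minf: "g u \<noteq> -\<infinity>"
  using g_proper unfolding proper_fun_def by blast

lemma g_finite_somewhere: "\<exists>u. g u < \<infinity>"
  using g_proper unfolding proper_fun_def by blast

text \<open>The existence of a minimiser of f + g is used only through this real lower bound.\<close>

definition phi_lb :: real where
  "phi_lb = (SOME c. \<forall>y. ereal c \<le> ereal (f y) + g y)"

lemma phi_lb_le: "ereal phi_lb \<le> ereal (f y) + g y"
proof -
  obtain z where z: "\<forall>y. ereal (f z) + g z \<le> ereal (f y) + g y" using argmin_ne by blast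
  obtain u where "g u < \<infinity>" using g_finite_somewhere by blast
  then have "ereal (f z) + g z < \<infinity>" using z[rule_format, of u] by (cases "g u") auto
  with g_not_minf[of z] obtain r where "g z = ereal r" by (cases "g z") auto
  with z have "\<exists>c. \<forall>y. ereal c \<le> ereal (f y) + g y" by (intro exI[of _ "f z + r"]) auto
  from someI_ex[OF this] show ?thesis unfolding phi_lb_def by blast
qed

lemma g_ge_phi_lb: "ereal (phi_lb - f u) \<le> g u"
  using phi_lb_le[of u] by (cases "g u") auto

definition prox_obj :: "real ^ 'n \<Rightarrow> real ^ 'n \<Rightarrow> ereal" where
  "prox_obj y u = g u + ereal ((norm (u - y))\<^sup>2 / (2 * \<gamma>))"

definition coercivity_modulus :: real where "coercivity_modulus = (1 / \<gamma> - Lf) / 2"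

lemma coercivity_modulus_pos: "0 < coercivity_modulus"
proof -
  have "Lf < 1 / \<gamma>" using \<gamma>_Lf \<gamma>_pos by (simp add: field_simps mult.commute)
  then show ?thesis unfolding coercivity_modulus_def by simp
qed

lemma prox_obj_lower:
  "ereal (phi_lb - f y - norm (gf y) * norm (u - y) + coercivity_modulus * (norm (u - y))\<^sup>2) \<le> prox_obj y u"
proof -
  have "gf y \<bullet> (u - y) \<le> norm (gf y) * norm (u - y)" by (rule norm_cauchy_schwarz)
  moreover have "coercivity_modulus * (norm (u - y))\<^sup>2 = (norm (u - y))\<^sup>2 / (2 * \<gamma>) - Lf / 2 * (norm (u - y))\<^sup>2"
    unfolding coercivity_modulus_def using \<gamma>_pos by (simp add: field_simps)
  ultimately have "phi_lb - f y - norm (gf y) * norm (u - y) + coercivity_modulus * (norm (u - y))\<^sup>2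
      \<le> (phi_lb - f u) + (norm (u - y))\<^sup>2 / (2 * \<gamma>)"
    using f_descent[of u y] by linarith
  then have "ereal (phi_lb - f y - norm (gf y) * norm (u - y) + coercivity_modulus * (norm (u - y))\<^sup>2)
      \<le> ereal (phi_lb - f u) + ereal ((norm (u - y))\<^sup>2 / (2 * \<gamma>))" by simp
  also have "\<dots> \<le> prox_obj y u" unfolding prox_obj_def by (intro add_right_mono g_ge_phi_lb)
  finally show ?thesis .
qed

lemma prox_obj_sublevel_bounded: "bounded {u. prox_obj y u \<le> ereal c}"
proof (rule bounded_subset[OF bounded_cball], clarify)
  fix u assume "prox_obj y u \<le> ereal c"
  then have "coercivity_modulus * (norm (u - y))\<^sup>2 - norm (gf y) * norm (u - y) \<le> c - phi_lb + f y"
    using prox_obj_lower[of y u] order_trans by fastforce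
  then have "norm (u - y) \<le> max 1 ((norm (gf y) + \<bar>c - phi_lb + f y\<bar>) / coercivity_modulus)"
    by (rule quadratic_growth_bound[OF coercivity_modulus_pos norm_ge_zero norm_ge_zero])
  then show "u \<in> cball y (max 1 ((norm (gf y) + \<bar>c - phi_lb + f y\<bar>) / coercivity_modulus))"
    by (simp add: dist_norm norm_minus_commute)
qed

lemma prox_obj_bdd_below: "ereal (phi_lb - f y - (norm (gf y))\<^sup>2 / (4 * coercivity_modulus)) \<le> prox_obj y u"
proof -
  have "0 \<le> (2 * coercivity_modulus * norm (u - y) - norm (gf y))\<^sup>2 / (4 * coercivity_modulus)" using coercivity_modulus_pos by simp
  also have "\<dots> = coercivity_modulus * (norm (u - y))\<^sup>2 - norm (gf y) * norm (u - y) + (norm (gf y))\<^sup>2 / (4 * coercivity_modulus)"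
    using coercivity_modulus_pos by (simp add: field_simps power2_eq_square)
  finally show ?thesis using prox_obj_lower[of y u] by (simp add: order_trans[rotated])
qed

lemma prox_obj_has_min: "\<exists>p. \<forall>u. prox_obj y p \<le> prox_obj y u"
proof -
  obtain u0 where "g u0 < \<infinity>" using g_finite_somewhere by blast
  moreover have "continuous_on UNIV (\<lambda>u. (norm (u - y))\<^sup>2 / (2 * \<gamma>))"
    by (intro continuous_intros) (use \<gamma>_pos in auto)
  ultimately obtain p where "\<And>u. prox_obj y p \<le> prox_obj y u"
    using lsc_fun_plus_continuous_has_min[OF g_lsc _ prox_obj_sublevel_bounded[of y, unfolded prox_obj_def]
        prox_obj_bdd_below[of y, unfolded prox_obj_def]]
    unfolding prox_obj_def by blast
  then show ?thesis by blast
qed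

definition convexity_modulus :: real where "convexity_modulus = 1 / \<gamma> - \<rho>"

lemma convexity_modulus_pos: "0 < convexity_modulus"
proof -
  have "\<rho> < 1 / \<gamma>" using \<gamma>_\<rho> \<gamma>_pos by (simp add: field_simps mult.commute)
  then show ?thesis unfolding convexity_modulus_def by simp
qed

text \<open>The quadratic term of prox_obj y has curvature 1/\<gamma>, of which the weak convexity of g
  uses up only \<rho>; what remains is strong convexity with modulus convexity_modulus.\<close>

lemma prox_obj_strongly_convex:
  assumes gp: "g p = ereal gp" and gu: "g u = ereal gu" and t: "0 \<le> t" "t \<le> 1"
  shows "prox_obj y ((1 - t) *\<^sub>R p + t *\<^sub>R u)
    \<le> ereal ((1 - t) * (gp + (norm (p - y))\<^sup>2 / (2 * \<gamma>)) + t * (gu + (norm (u - y))\<^sup>2 / (2 * \<gamma>))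
        - convexity_modulus / 2 * t * (1 - t) * (norm (u - p))\<^sup>2)"
proof -
  define w where "w = (1 - t) *\<^sub>R p + t *\<^sub>R u"
  define D where "D = (norm (u - p))\<^sup>2"
  define A where "A = (1 - t) * (gp + \<rho> / 2 * (norm p)\<^sup>2) + t * (gu + \<rho> / 2 * (norm u)\<^sup>2)"
  have "g w + ereal (\<rho> / 2 * (norm w)\<^sup>2) \<le> ereal (1 - t) * (g p + ereal (\<rho> / 2 * (norm p)\<^sup>2))
      + ereal t * (g u + ereal (\<rho> / 2 * (norm u)\<^sup>2))"
    using g_wc t unfolding weakly_convex_def ereal_convex_def w_def by auto
  then have "g w + ereal (\<rho> / 2 * (norm w)\<^sup>2) \<le> ereal A"
    unfolding A_def gp gu by simp
  then obtain gw where gw: "g w = ereal gw" and gw_le: "gw + \<rho> / 2 * (norm w)\<^sup>2 \<le> A"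
    using g_not_minf[of w] by (cases "g w") auto
  have nw: "(norm w)\<^sup>2 = (1 - t) * (norm p)\<^sup>2 + t * (norm u)\<^sup>2 - t * (1 - t) * D"
    unfolding w_def D_def using power2_norm_convex_combination[of t p u] by (simp add: norm_minus_commute)
  have "w - y = (1 - t) *\<^sub>R (p - y) + t *\<^sub>R (u - y)" unfolding w_def by (simp add: algebra_simps)
  then have nwy: "(norm (w - y))\<^sup>2 = (1 - t) * (norm (p - y))\<^sup>2 + t * (norm (u - y))\<^sup>2 - t * (1 - t) * D"
    unfolding D_def using power2_norm_convex_combination[of t "p - y" "u - y"] by (simp add: norm_minus_commute)
  have "A - \<rho> / 2 * (norm w)\<^sup>2 + (norm (w - y))\<^sup>2 / (2 * \<gamma>)
      = (1 - t) * (gp + (norm (p - y))\<^sup>2 / (2 * \<gamma>)) + t * (gu + (norm (u - y))\<^sup>2 / (2 * \<gamma>))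
        - convexity_modulus / 2 * t * (1 - t) * D"
    unfolding A_def nw nwy convexity_modulus_def using \<gamma>_pos by (simp add: field_simps)
  with gw_le have "gw + (norm (w - y))\<^sup>2 / (2 * \<gamma>)
      \<le> (1 - t) * (gp + (norm (p - y))\<^sup>2 / (2 * \<gamma>)) + t * (gu + (norm (u - y))\<^sup>2 / (2 * \<gamma>))
        - convexity_modulus / 2 * t * (1 - t) * D"
    by linarith
  then show ?thesis unfolding prox_obj_def w_def[symmetric] gw D_def by simp
qed

lemma prox_obj_quadratic_growth:
  assumes p: "\<And>w. prox_obj y p \<le> prox_obj y w"
  shows "prox_obj y p + ereal (convexity_modulus / 2 * (norm (u - p))\<^sup>2) \<le> prox_obj y u"
proof (cases "g u = \<infinity>")
  case True
  then show ?thesis unfolding prox_obj_def by simp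
next
  case False
  obtain gu where gu: "g u = ereal gu" using False g_not_minf[of u] by (cases "g u") auto
  have "prox_obj y p < \<infinity>" using p[of u] unfolding prox_obj_def gu by auto
  then obtain gp where gp: "g p = ereal gp" using g_not_minf[of p] unfolding prox_obj_def by (cases "g p") auto
  define D where "D = (norm (u - p))\<^sup>2"
  define Fp where "Fp = gp + (norm (p - y))\<^sup>2 / (2 * \<gamma>)"
  define Fu where "Fu = gu + (norm (u - y))\<^sup>2 / (2 * \<gamma>)"
  have "(1 - t) * (convexity_modulus / 2 * D) \<le> Fu - Fp" if t: "0 < t" "t \<le> 1" for t
  proof -
    have "ereal Fp \<le> prox_obj y ((1 - t) *\<^sub>R p + t *\<^sub>R u)"
      using p unfolding prox_obj_def gp Fp_def by simp
    also have "\<dots> \<le> ereal ((1 - t) * Fp + t * Fu - convexity_modulus / 2 * t * (1 - t) * D)"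
      using prox_obj_strongly_convex[OF gp gu, of t y] t unfolding Fp_def Fu_def D_def by simp
    finally have "Fp \<le> (1 - t) * Fp + t * Fu - convexity_modulus / 2 * t * (1 - t) * D" by simp
    then have "t * ((1 - t) * (convexity_modulus / 2 * D)) \<le> t * (Fu - Fp)" by (simp add: algebra_simps)
    then show ?thesis using t(1) by simp
  qed
  then have "convexity_modulus / 2 * D \<le> Fu - Fp" by (rule le_if_one_minus_mult_le)
  then show ?thesis unfolding prox_obj_def gp gu Fp_def Fu_def D_def by simp
qed

lemma prox_obj_min_unique:
  assumes "\<And>w. prox_obj y p \<le> prox_obj y w" and "\<And>w. prox_obj y p' \<le> prox_obj y w"
  shows "p' = p"
proof -
  have "prox_obj y p + ereal (convexity_modulus / 2 * (norm (p' - p))\<^sup>2) \<le> prox_obj y p"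
    using prox_obj_quadratic_growth[OF assms(1), of p'] assms(2)[of p] by (rule order_trans)
  moreover obtain u where "g u < \<infinity>" using g_finite_somewhere by blast
  then have "prox_obj y p < \<infinity>" using assms(1)[of u] by (auto simp: prox_obj_def order_le_less_trans)
  moreover have "prox_obj y p \<noteq> -\<infinity>" using g_not_minf[of p] by (simp add: prox_obj_def)
  ultimately have "convexity_modulus / 2 * (norm (p' - p))\<^sup>2 \<le> 0" by (cases "prox_obj y p") auto
  then show ?thesis using convexity_modulus_pos by (simp add: mult_le_0_iff)
qed

lemma prox_minimizes: "prox_obj y (prox \<gamma> g y) \<le> prox_obj y u"
proof -
  have "\<exists>!p. \<forall>w. prox_obj y p \<le> prox_obj y w"
    using prox_obj_has_min[of y] prox_obj_min_unique[of y] by blast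
  from theI'[OF this] show ?thesis unfolding prox_def prox_obj_def by blast
qed

definition g_real :: "real ^ 'n \<Rightarrow> real" where "g_real u = real_of_ereal (g u)"

lemma g_prox_finite: "g (prox \<gamma> g y) = ereal (g_real (prox \<gamma> g y))"
proof -
  obtain u where "g u < \<infinity>" using g_finite_somewhere by blast
  then have "g (prox \<gamma> g y) \<noteq> \<infinity>" using prox_minimizes[of y u] by (auto simp: prox_obj_def)
  then show ?thesis using g_not_minf unfolding g_real_def by (cases "g (prox \<gamma> g y)") auto
qed

lemma prox_obj_real: "g u = ereal (g_real u) \<Longrightarrow> prox_obj y u = ereal (g_real u + (norm (u - y))\<^sup>2 / (2 * \<gamma>))"
  unfolding prox_obj_def by simp

lemma prox_strongly_monotone:
  "convexity_modulus * (norm (prox \<gamma> g y - prox \<gamma> g y'))\<^sup>2 \<le> ((prox \<gamma> g y - prox \<gamma> g y') \<bullet> (y - y')) / \<gamma>"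
proof -
  define p where "p = prox \<gamma> g y"
  define p' where "p' = prox \<gamma> g y'"
  define D where "D = (norm (p - p'))\<^sup>2"
  have gp: "g p = ereal (g_real p)" and gp': "g p' = ereal (g_real p')"
    unfolding p_def p'_def by (rule g_prox_finite)+
  have "prox_obj y p + ereal (convexity_modulus / 2 * D) \<le> prox_obj y p'"
    using prox_obj_quadratic_growth[OF prox_minimizes[of y], of p'] unfolding p_def p'_def D_def
    by (simp add: norm_minus_commute)
  moreover have "prox_obj y' p' + ereal (convexity_modulus / 2 * D) \<le> prox_obj y' p"
    using prox_obj_quadratic_growth[OF prox_minimizes[of y'], of p] unfolding p_def p'_def D_def by simp
  ultimately have "convexity_modulus * D \<le> (norm (p' - y))\<^sup>2 / (2 * \<gamma>) - (norm (p - y))\<^sup>2 / (2 * \<gamma>)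
      + (norm (p - y'))\<^sup>2 / (2 * \<gamma>) - (norm (p' - y'))\<^sup>2 / (2 * \<gamma>)"
    unfolding prox_obj_real[OF gp] prox_obj_real[OF gp'] by simp
  also have "\<dots> = ((norm (p' - y))\<^sup>2 - (norm (p - y))\<^sup>2 + (norm (p - y'))\<^sup>2 - (norm (p' - y'))\<^sup>2) / (2 * \<gamma>)"
    by (simp add: diff_divide_distrib add_divide_distrib)
  finally show ?thesis unfolding power2_norm_diff_cross p_def p'_def D_def by simp
qed

definition prox_lip_const :: real where "prox_lip_const = 1 / (1 - \<gamma> * \<rho>)"

lemma prox_lipschitz: "prox_lip_const-lipschitz_on UNIV (prox \<gamma> g)"
proof (rule lipschitz_onI)
  fix y y' :: "real ^ 'n"
  define e where "e = norm (prox \<gamma> g y - prox \<gamma> g y')"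
  have "convexity_modulus * e\<^sup>2 \<le> ((prox \<gamma> g y - prox \<gamma> g y') \<bullet> (y - y')) / \<gamma>"
    unfolding e_def by (rule prox_strongly_monotone)
  also have "\<dots> \<le> e * norm (y - y') / \<gamma>"
    unfolding e_def using \<gamma>_pos by (intro divide_right_mono norm_cauchy_schwarz) auto
  finally have "e * (convexity_modulus * e) \<le> e * (norm (y - y') / \<gamma>)" by (simp add: power2_eq_square ac_simps)
  then have "convexity_modulus * e \<le> norm (y - y') / \<gamma>"
    using \<gamma>_pos by (cases "e = 0") (auto simp: e_def intro: mult_left_le_imp_le)
  then have "(\<gamma> * convexity_modulus) * e \<le> norm (y - y')" using \<gamma>_pos by (simp add: field_simps)
  moreover have "\<gamma> * convexity_modulus = 1 - \<gamma> * \<rho>" unfolding convexity_modulus_def using \<gamma>_pos by (simp add: field_simps)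
  ultimately have "e \<le> norm (y - y') / (1 - \<gamma> * \<rho>)" using \<gamma>_\<rho> by (simp add: field_simps)
  then show "dist (prox \<gamma> g y) (prox \<gamma> g y') \<le> prox_lip_const * dist y y'"
    by (simp add: prox_lip_const_def dist_norm e_def)
next
  show "0 \<le> prox_lip_const" using \<gamma>_\<rho> by (simp add: prox_lip_const_def)
qed

lemma prox_cont: "continuous_on UNIV (prox \<gamma> g)"
  using prox_lipschitz by (rule lipschitz_on_continuous_on)

definition moreau :: "real ^ 'n \<Rightarrow> real" where
  "moreau y = g_real (prox \<gamma> g y) + (norm (prox \<gamma> g y - y))\<^sup>2 / (2 * \<gamma>)"

definition moreau_grad :: "real ^ 'n \<Rightarrow> real ^ 'n" where
  "moreau_grad y = (1 / \<gamma>) *\<^sub>R (y - prox \<gamma> g y)"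

lemma prox_obj_prox: "prox_obj y (prox \<gamma> g y) = ereal (moreau y)"
  unfolding moreau_def using prox_obj_real[OF g_prox_finite] .

lemma moreau_le: "g u = ereal (g_real u) \<Longrightarrow> moreau y \<le> g_real u + (norm (u - y))\<^sup>2 / (2 * \<gamma>)"
  using prox_minimizes[of y u] prox_obj_prox[of y] prox_obj_real[of u y] by simp

lemma moreau_upper: "moreau y' - moreau y \<le> moreau_grad y \<bullet> (y' - y) + (norm (y' - y))\<^sup>2 / (2 * \<gamma>)"
proof -
  define p where "p = prox \<gamma> g y"
  have "moreau y' \<le> g_real p + (norm (p - y'))\<^sup>2 / (2 * \<gamma>)"
    unfolding p_def by (rule moreau_le[OF g_prox_finite])
  moreover have "moreau y = g_real p + (norm (p - y))\<^sup>2 / (2 * \<gamma>)" unfolding p_def moreau_def ..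
  moreover have "(norm (p - y'))\<^sup>2 = (norm (p - y))\<^sup>2 + 2 * ((y - p) \<bullet> (y' - y)) + (norm (y' - y))\<^sup>2"
    by (simp add: power2_norm_eq_inner inner_commute algebra_simps)
  moreover have "moreau_grad y \<bullet> (y' - y) = ((y - p) \<bullet> (y' - y)) / \<gamma>" unfolding moreau_grad_def p_def by simp
  ultimately show ?thesis using \<gamma>_pos by (simp add: field_simps)
qed

lemma moreau_grad_lipschitz: "norm (moreau_grad y' - moreau_grad y) \<le> (1 + prox_lip_const) / \<gamma> * norm (y' - y)"
proof -
  have "moreau_grad y' - moreau_grad y = (1 / \<gamma>) *\<^sub>R ((y' - y) - (prox \<gamma> g y' - prox \<gamma> g y))"
    unfolding moreau_grad_def by (simp add: algebra_simps)
  then have "norm (moreau_grad y' - moreau_grad y) = (1 / \<gamma>) * norm ((y' - y) - (prox \<gamma> g y' - prox \<gamma> g y))"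
    using \<gamma>_pos by simp
  also have "\<dots> \<le> (1 / \<gamma>) * (norm (y' - y) + prox_lip_const * norm (y' - y))"
    using \<gamma>_pos lipschitz_onD[OF prox_lipschitz, of y' y]
      norm_triangle_ineq4[of "y' - y" "prox \<gamma> g y' - prox \<gamma> g y"]
    by (intro mult_left_mono) (auto simp: dist_norm)
  finally show ?thesis using \<gamma>_pos by (simp add: field_simps)
qed

lemma moreau_linearization:
  "\<bar>moreau y' - moreau y - moreau_grad y \<bullet> (y' - y)\<bar>
    \<le> ((1 + prox_lip_const) / \<gamma> + 1 / (2 * \<gamma>)) * (norm (y' - y))\<^sup>2"
proof -
  have "\<bar>(moreau_grad y' - moreau_grad y) \<bullet> (y' - y)\<bar> \<le> norm (moreau_grad y' - moreau_grad y) * norm (y' - y)"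
    by (rule Cauchy_Schwarz_ineq2)
  also have "\<dots> \<le> (1 + prox_lip_const) / \<gamma> * norm (y' - y) * norm (y' - y)"
    by (rule mult_right_mono[OF moreau_grad_lipschitz]) simp
  finally have "- ((1 + prox_lip_const) / \<gamma> * (norm (y' - y))\<^sup>2) \<le> (moreau_grad y' - moreau_grad y) \<bullet> (y' - y)"
    by (simp add: power2_eq_square)
  moreover have "moreau y - moreau y' \<le> moreau_grad y' \<bullet> (y - y') + (norm (y' - y))\<^sup>2 / (2 * \<gamma>)"
    using moreau_upper[of y y'] by (simp add: norm_minus_commute)
  moreover have "moreau_grad y' \<bullet> (y - y') = - (moreau_grad y' \<bullet> (y' - y))" by (simp add: inner_diff_right)
  moreover have "0 \<le> (1 + prox_lip_const) / \<gamma> * (norm (y' - y))\<^sup>2"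
    using prox_lipschitz \<gamma>_pos by (simp add: lipschitz_on_nonneg)
  ultimately show ?thesis using moreau_upper[of y' y]
    by (simp add: abs_le_iff algebra_simps)
qed

lemma moreau_has_derivative: "(moreau has_derivative (\<lambda>h. moreau_grad y \<bullet> h)) (at y)"
  unfolding has_derivative_iff_norm
proof
  show "bounded_linear ((\<bullet>) (moreau_grad y))" by (rule bounded_linear_inner_right)
  define C where "C = (1 + prox_lip_const) / \<gamma> + 1 / (2 * \<gamma>)"
  have "((\<lambda>y'. y' - y) \<longlongrightarrow> y - y) (at y)" by (intro tendsto_intros)
  then have lim: "((\<lambda>y'. y' - y) \<longlongrightarrow> 0) (at y)" by simp
  have bound: "norm (norm (moreau y' - moreau y - moreau_grad y \<bullet> (y' - y)) / norm (y' - y))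
      \<le> norm (y' - y) * C" for y'
  proof (cases "y' = y")
    case False
    then have "\<bar>moreau y' - moreau y - moreau_grad y \<bullet> (y' - y)\<bar> / norm (y' - y)
        \<le> C * (norm (y' - y))\<^sup>2 / norm (y' - y)"
      using moreau_linearization[of y' y] by (simp add: C_def divide_right_mono)
    then show ?thesis using False by (simp add: power2_eq_square mult.commute)
  qed simp
  show "((\<lambda>y'. norm (moreau y' - moreau y - moreau_grad y \<bullet> (y' - y)) / norm (y' - y))
      \<longlongrightarrow> 0) (at y)"
    by (rule tendsto_0_le[OF lim always_eventually]) (use bound in blast)
qed

lemma linearized_obj_eq:
  "f x + gf x \<bullet> (u - x) + (norm (u - x))\<^sup>2 / (2 * \<gamma>)
    = (norm (u - (x - \<gamma> *\<^sub>R gf x)))\<^sup>2 / (2 * \<gamma>) + (f x - \<gamma> / 2 * (gf x \<bullet> gf x))"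
proof -
  have "(norm (u - (x - \<gamma> *\<^sub>R gf x)))\<^sup>2
      = (norm (u - x))\<^sup>2 + 2 * \<gamma> * (gf x \<bullet> (u - x)) + \<gamma> * \<gamma> * (gf x \<bullet> gf x)"
    by (simp add: power2_norm_eq_inner inner_commute algebra_simps)
  then show ?thesis using \<gamma>_pos by (simp add: field_simps power2_eq_square)
qed

lemma fbe_moreau: "fbe \<gamma> f gf g x = f x - \<gamma> / 2 * (gf x \<bullet> gf x) + moreau (x - \<gamma> *\<^sub>R gf x)"
proof -
  define y where "y = x - \<gamma> *\<^sub>R gf x"
  define c where "c = f x - \<gamma> / 2 * (gf x \<bullet> gf x)"
  have "ereal (f x + gf x \<bullet> (u - x) + (norm (u - x))\<^sup>2 / (2 * \<gamma>)) + g u = prox_obj y u + ereal c" for u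
    unfolding prox_obj_def linearized_obj_eq y_def c_def by (cases "g u") auto
  then have "(INF u. ereal (f x + gf x \<bullet> (u - x) + (norm (u - x))\<^sup>2 / (2 * \<gamma>)) + g u)
      = (INF u. prox_obj y u + ereal c)" by simp
  also have "\<dots> = prox_obj y (prox \<gamma> g y) + ereal c"
  proof (rule antisym)
    show "(INF u. prox_obj y u + ereal c) \<le> prox_obj y (prox \<gamma> g y) + ereal c"
      by (rule INF_lower) simp
    show "prox_obj y (prox \<gamma> g y) + ereal c \<le> (INF u. prox_obj y u + ereal c)"
      using prox_minimizes[of y] by (intro INF_greatest add_right_mono) auto
  qed
  finally show ?thesis unfolding fbe_def prox_obj_prox y_def c_def by simp
qed

text \<open>The gradient of the envelope is the transpose of I - \<gamma> Hf x applied to R(x); the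
  transpose appears as a row-vector product, so no symmetry of the Hessian is needed.\<close>

definition fbe_grad :: "real ^ 'n \<Rightarrow> real ^ 'n" where
  "fbe_grad x = resid \<gamma> gf g x - \<gamma> *\<^sub>R (resid \<gamma> gf g x v* Hf x)"

lemma fbe_has_derivative_fbe_grad: "(fbe \<gamma> f gf g has_derivative (\<lambda>h. fbe_grad x \<bullet> h)) (at x)"
proof -
  define y where "y = x - \<gamma> *\<^sub>R gf x"
  have "((\<lambda>x. x - \<gamma> *\<^sub>R gf x) has_derivative (\<lambda>h. h - \<gamma> *\<^sub>R (Hf x *v h))) (at x)"
    by (intro derivative_intros gf_deriv)
  from has_derivative_compose[OF this moreau_has_derivative]
  have "((\<lambda>x. moreau (x - \<gamma> *\<^sub>R gf x)) has_derivative
      (\<lambda>h. moreau_grad y \<bullet> (h - \<gamma> *\<^sub>R (Hf x *v h)))) (at x)" unfolding y_def .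
  moreover have "((\<lambda>x. gf x \<bullet> gf x) has_derivative (\<lambda>h. gf x \<bullet> (Hf x *v h) + (Hf x *v h) \<bullet> gf x)) (at x)"
    using has_derivative_inner[OF gf_deriv gf_deriv] .
  ultimately have "((\<lambda>x. f x - \<gamma> / 2 * (gf x \<bullet> gf x) + moreau (x - \<gamma> *\<^sub>R gf x)) has_derivative
      (\<lambda>h. gf x \<bullet> h - \<gamma> / 2 * (gf x \<bullet> (Hf x *v h) + (Hf x *v h) \<bullet> gf x)
        + moreau_grad y \<bullet> (h - \<gamma> *\<^sub>R (Hf x *v h)))) (at x)"
    by (intro has_derivative_add has_derivative_diff has_derivative_mult_right f_deriv)
  moreover have "moreau_grad y = resid \<gamma> gf g x - gf x"
    unfolding moreau_grad_def resid_def y_def using \<gamma>_pos by (simp add: algebra_simps)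
  moreover have row: "h \<bullet> (v v* A) = (A *v h) \<bullet> v" for h v :: "real ^ 'n" and A :: "'n mat"
    by (metis dot_lmul_matrix inner_commute)
  ultimately have "((\<lambda>x. f x - \<gamma> / 2 * (gf x \<bullet> gf x) + moreau (x - \<gamma> *\<^sub>R gf x)) has_derivative
      (\<lambda>h. gf x \<bullet> h - \<gamma> / 2 * (gf x \<bullet> (Hf x *v h) + (Hf x *v h) \<bullet> gf x)
        + (resid \<gamma> gf g x - gf x) \<bullet> (h - \<gamma> *\<^sub>R (Hf x *v h)))) (at x)" by simp
  moreover have "(\<lambda>h. gf x \<bullet> h - \<gamma> / 2 * (gf x \<bullet> (Hf x *v h) + (Hf x *v h) \<bullet> gf x)
        + (resid \<gamma> gf g x - gf x) \<bullet> (h - \<gamma> *\<^sub>R (Hf x *v h))) = (\<lambda>h. fbe_grad x \<bullet> h)"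
    unfolding fbe_grad_def by (rule ext) (simp add: row inner_commute algebra_simps)
  ultimately show ?thesis unfolding fbe_moreau[abs_def] by simp
qed

lemma grad_fbe: "grad (fbe \<gamma> f gf g) x = fbe_grad x"
  by (rule grad_eqI[OF fbe_has_derivative_fbe_grad])

lemma fbe_has_grad: "(fbe \<gamma> f gf g has_derivative (\<lambda>h. grad (fbe \<gamma> f gf g) x \<bullet> h)) (at x)"
  unfolding grad_fbe by (rule fbe_has_derivative_fbe_grad)

lemma grad_fbe_eq_0: "resid \<gamma> gf g x = 0 \<Longrightarrow> grad (fbe \<gamma> f gf g) x = 0"
  unfolding grad_fbe fbe_grad_def by simp

lemma grad_fbe_cont: "continuous_on UNIV (grad (fbe \<gamma> f gf g))"
proof -
  have "continuous_on UNIV (\<lambda>x. x - \<gamma> *\<^sub>R gf x)" by (intro continuous_intros gf_cont)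
  then have "continuous_on UNIV (\<lambda>x. prox \<gamma> g (x - \<gamma> *\<^sub>R gf x))"
    by (rule continuous_on_compose2[OF prox_cont]) auto
  then have "continuous_on UNIV (resid \<gamma> gf g)"
    unfolding resid_def[abs_def] by (intro continuous_intros)
  then show ?thesis
    unfolding grad_fbe[abs_def] fbe_grad_def[abs_def] by (intro continuous_intros Hf_cont)
qed

lemma fbe_prox_form:
  "fbe \<gamma> f gf g x = f x + gf x \<bullet> (prox \<gamma> g (x - \<gamma> *\<^sub>R gf x) - x)
     + (norm (prox \<gamma> g (x - \<gamma> *\<^sub>R gf x) - x))\<^sup>2 / (2 * \<gamma>) + g_real (prox \<gamma> g (x - \<gamma> *\<^sub>R gf x))"
  unfolding fbe_moreau moreau_def linearized_obj_eq by simp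

lemma fbe_ge_prox_value:
  fixes x :: "real ^ 'n"
  defines "p \<equiv> prox \<gamma> g (x - \<gamma> *\<^sub>R gf x)"
  shows "f p + g_real p + coercivity_modulus * (norm (p - x))\<^sup>2 \<le> fbe \<gamma> f gf g x"
proof -
  have "(norm (p - x))\<^sup>2 / (2 * \<gamma>) = Lf / 2 * (norm (p - x))\<^sup>2 + coercivity_modulus * (norm (p - x))\<^sup>2"
    unfolding coercivity_modulus_def using \<gamma>_pos by (simp add: field_simps)
  then show ?thesis unfolding fbe_prox_form p_def[symmetric] using f_descent[of p x] by linarith
qed

lemma phi_lb_le_prox:
  "phi_lb \<le> f (prox \<gamma> g y) + g_real (prox \<gamma> g y)"
  using phi_lb_le[of "prox \<gamma> g y"] unfolding g_prox_finite by simp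

lemma fbe_lower_bound: "phi_lb \<le> fbe \<gamma> f gf g x"
  using fbe_ge_prox_value[of x] phi_lb_le_prox[of "x - \<gamma> *\<^sub>R gf x"] coercivity_modulus_pos
  by (meson add_increasing2 order_trans zero_le_power2 mult_nonneg_nonneg less_imp_le)

lemma fbe_le_phi: "g x = ereal (g_real x) \<Longrightarrow> fbe \<gamma> f gf g x \<le> f x + g_real x"
  using moreau_le[of x "x - \<gamma> *\<^sub>R gf x"] linearized_obj_eq[of x x] unfolding fbe_moreau by simp

lemma fbe_sublevel_bounded:
  assumes bdd: "bounded {y. ereal (f y) + g y \<le> ereal (f x0) + g x0}"
  shows "bounded {x. fbe \<gamma> f gf g x \<le> fbe \<gamma> f gf g x0}"
proof -
  have gx0: "g x0 = ereal (g_real x0)"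
  proof (rule ccontr)
    assume "g x0 \<noteq> ereal (g_real x0)"
    then have "g x0 = \<infinity>" using g_not_minf[of x0] unfolding g_real_def by (cases "g x0") auto
    with bdd show False by simp
  qed
  obtain R where R: "\<And>y. ereal (f y) + g y \<le> ereal (f x0) + g x0 \<Longrightarrow> norm y \<le> R"
    using bdd unfolding bounded_iff by blast
  define r where "r = sqrt ((fbe \<gamma> f gf g x0 - phi_lb) / coercivity_modulus)"
  have "norm x \<le> R + r" if x: "fbe \<gamma> f gf g x \<le> fbe \<gamma> f gf g x0" for x
  proof -
    define p where "p = prox \<gamma> g (x - \<gamma> *\<^sub>R gf x)"
    have ge: "f p + g_real p + coercivity_modulus * (norm (p - x))\<^sup>2 \<le> fbe \<gamma> f gf g x"
      unfolding p_def by (rule fbe_ge_prox_value)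
    have "0 \<le> coercivity_modulus * (norm (p - x))\<^sup>2" using coercivity_modulus_pos by simp
    then have "f p + g_real p \<le> f x0 + g_real x0" using ge x fbe_le_phi[OF gx0] by linarith
    then have "norm p \<le> R" using R[of p] unfolding p_def g_prox_finite gx0 by simp
    moreover have "coercivity_modulus * (norm (p - x))\<^sup>2 \<le> fbe \<gamma> f gf g x0 - phi_lb"
      using ge x phi_lb_le_prox[of "x - \<gamma> *\<^sub>R gf x"] unfolding p_def by linarith
    then have "norm (p - x) \<le> r"
      unfolding r_def using coercivity_modulus_pos by (intro real_le_rsqrt) (simp add: field_simps)
    moreover have "norm x \<le> norm p + norm (p - x)" using norm_triangle_ineq4[of p "p - x"] by simp
    ultimately show ?thesis by linarith
  qed
  then show ?thesis unfolding bounded_iff by blast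
qed

lemma Qmat_norm_bounded:
  assumes "bounded S"
  obtains q where "\<And>y. y \<in> S \<Longrightarrow> mat_norm (Qmat \<gamma> Hf y) \<le> q"
proof -
  have "bounded (Hf ` closure S)"
    using assms by (intro compact_imp_bounded compact_continuous_image continuous_on_subset[OF Hf_cont]) auto
  then obtain H where H: "\<And>y. y \<in> S \<Longrightarrow> norm (Hf y) \<le> H"
    using closure_subset unfolding bounded_iff by blast
  have "mat_norm (Qmat \<gamma> Hf y) \<le> 1 + \<gamma> * (real CARD('n) * real CARD('n) * H)" if "y \<in> S" for y
  proof -
    have "mat_norm (Hf y) \<le> real CARD('n) * real CARD('n) * H"
      using mat_norm_le_norm[of "Hf y"] H[OF that]
      by (meson mult_left_mono of_nat_0_le_iff mult_nonneg_nonneg order_trans)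
    then have "\<gamma> * mat_norm (Hf y) \<le> \<gamma> * (real CARD('n) * real CARD('n) * H)"
      using \<gamma>_pos by simp
    moreover have "mat_norm (\<gamma> *\<^sub>R Hf y) \<le> \<gamma> * mat_norm (Hf y)"
      using mat_norm_scaleR_le[of \<gamma> "Hf y"] \<gamma>_pos by simp
    moreover have "mat_norm (Qmat \<gamma> Hf y) \<le> mat_norm (mat 1 :: 'n mat) + mat_norm (\<gamma> *\<^sub>R Hf y)"
      unfolding Qmat_def by (rule mat_norm_diff_le)
    moreover have "mat_norm (mat 1 :: 'n mat) \<le> 1" by (rule mat_norm_one_le)
    ultimately show ?thesis by linarith
  qed
  then show ?thesis using that by blast
qed

lemma Bmat_norm_le:
  assumes Q: "mat_norm (Qmat \<gamma> Hf y) \<le> q" and P: "P \<in> clarke_jac (prox \<gamma> g) (y - \<gamma> *\<^sub>R gf y)"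
  shows "mat_norm (Bmat \<gamma> Hf P y) \<le> 1 / \<gamma> * (q * (1 + prox_lip_const * q))"
proof -
  define Q where "Q = Qmat \<gamma> Hf y"
  have "mat_norm P \<le> prox_lip_const" by (rule clarke_jac_mat_norm_le[OF prox_lipschitz P])
  then have "mat_norm (P ** Q) \<le> prox_lip_const * q"
    using mat_norm_mult_le[of P Q] Q mat_norm_nonneg[of P] mat_norm_nonneg[of Q]
    unfolding Q_def by (meson mult_mono order_trans)
  then have "mat_norm (mat 1 - P ** Q) \<le> 1 + prox_lip_const * q"
    using mat_norm_diff_le[of "mat 1" "P ** Q"] mat_norm_one_le[where 'a = 'n] by linarith
  then have "mat_norm (Q ** (mat 1 - P ** Q)) \<le> q * (1 + prox_lip_const * q)"
    using mat_norm_mult_le[of Q "mat 1 - P ** Q"] Q mat_norm_nonneg[of Q]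
      mat_norm_nonneg[of "mat 1 - P ** Q"] unfolding Q_def by (meson mult_mono order_trans)
  then have "mat_norm (Q ** (mat 1 - P ** Q)) / \<gamma> \<le> 1 / \<gamma> * (q * (1 + prox_lip_const * q))"
    using \<gamma>_pos by (simp add: divide_right_mono)
  moreover have "mat_norm (Bmat \<gamma> Hf P y) \<le> mat_norm (Q ** (mat 1 - P ** Q)) / \<gamma>"
    using mat_norm_scaleR_le[of "1 / \<gamma>" "Q ** (mat 1 - P ** Q)"] \<gamma>_pos
    unfolding Bmat_def Q_def by simp
  ultimately show ?thesis by linarith
qed

lemma trust_region_fbe_grad_tendsto_zero:
  assumes tr: "trust_region (fbe \<gamma> f gf g) (grad (fbe \<gamma> f gf g)) (\<lambda>k. Bmat \<gamma> Hf (P k) (x k))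
      x d \<delta> model_decrease ratio \<mu>1 \<mu>2 c1 c2 c3 \<beta>"
    and level_bdd: "bounded {y. ereal (f y) + g y \<le> ereal (f (x 0)) + g (x 0)}"
    and P_sel: "\<And>k. P k \<in> clarke_jac (prox \<gamma> g) (x k - \<gamma> *\<^sub>R gf (x k))"
  shows "(\<lambda>k. norm (grad (fbe \<gamma> f gf g) (x k))) \<longlonglongrightarrow> 0"
proof -
  interpret trust_region "fbe \<gamma> f gf g" "grad (fbe \<gamma> f gf g)" "\<lambda>k. Bmat \<gamma> Hf (P k) (x k)"
    x d \<delta> model_decrease ratio \<mu>1 \<mu>2 c1 c2 c3 \<beta>
    by (rule tr)
  have bounded: "bounded (range x)"
    using fbe_sublevel_bounded[OF level_bdd] value_le_initial by (auto intro: bounded_subset)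
  obtain q where q: "\<And>y. y \<in> range x \<Longrightarrow> mat_norm (Qmat \<gamma> Hf y) \<le> q"
    using Qmat_norm_bounded[OF bounded] by blast
  define M where "M = max 1 (1 / \<gamma> * (q * (1 + prox_lip_const * q)))"
  have "mat_norm (Bmat \<gamma> Hf (P k) (x k)) \<le> M" for k
    using Bmat_norm_le[OF q[OF rangeI] P_sel] unfolding M_def by (rule max.coboundedI2)
  moreover have "0 < M" by (simp add: M_def)
  ultimately interpret trust_region_bounded "fbe \<gamma> f gf g" "grad (fbe \<gamma> f gf g)"
    "\<lambda>k. Bmat \<gamma> Hf (P k) (x k)" x d \<delta> model_decrease ratio \<mu>1 \<mu>2 c1 c2 c3 \<beta> M
    using tr bounded
    by (intro trust_region_bounded.intro trust_region_bounded_axioms.intro fbe_has_grad grad_fbe_cont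
        bdd_belowI2[of _ phi_lb] fbe_lower_bound)
  show ?thesis by (rule grad_tendsto_zero)
qed

end

theorem theorem4p7:
  fixes f :: "real ^ 'n::finite \<Rightarrow> real"
    and gf :: "real ^ 'n \<Rightarrow> real ^ 'n"
    and Hf :: "real ^ 'n \<Rightarrow> 'n mat"
    and g :: "real ^ 'n \<Rightarrow> ereal"
    and Lf \<rho> \<gamma> \<mu>1 \<mu>2 c1 c2 c3 \<beta> :: real
    and x d :: "nat \<Rightarrow> real ^ 'n"
    and \<delta> :: "nat \<Rightarrow> real"
    and P :: "nat \<Rightarrow> 'n mat"
  assumes f_C2: "C2plus f gf Hf"
    and f_lip: "Lf-lipschitz_on UNIV gf"
    and g_proper: "proper_fun g"
    and g_lsc: "lsc_fun g"
    and rho_nonneg: "0 \<le> \<rho>"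
    and g_wc: "weakly_convex \<rho> g"
    and argmin_ne: "\<exists>z. \<forall>y. ereal (f z) + g z \<le> ereal (f y) + g y"
    and level_bdd: "bounded {y. ereal (f y) + g y \<le> ereal (f (x 0)) + g (x 0)}"
    and gamma: "0 < \<gamma>" "\<gamma> * Lf < 1" "\<gamma> * \<rho> < 1"
    and delta0: "0 < \<delta> 0"
    and mu: "0 < \<mu>1" "\<mu>1 < \<mu>2" "\<mu>2 < 1"
    and cs: "0 < c1" "c1 < c2" "c2 < 1" "1 < c3"
    and beta: "0 < \<beta>" "\<beta> < 1"
    and P_sel: "\<forall>k. P k \<in> clarke_jac (prox \<gamma> g) (x k - \<gamma> *\<^sub>R gf (x k))"
    and stopped: "\<forall>k. resid \<gamma> gf g (x k) = 0 \<and> lambda_min (Bmat \<gamma> Hf (P k) (x k)) \<ge> 0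
                     \<longrightarrow> (\<forall>j\<ge>k. x j = x k)"
    and step: "\<forall>k. \<not> (resid \<gamma> gf g (x k) = 0 \<and> lambda_min (Bmat \<gamma> Hf (P k) (x k)) \<ge> 0) \<longrightarrow>
      (let phi = fbe \<gamma> f gf g;
           G = grad (fbe \<gamma> f gf g) (x k);
           B = Bmat \<gamma> Hf (P k) (x k);
           m = tr_model (phi (x k)) G B;
           r = (phi (x k) - phi (x k + d k)) / (m 0 - m (d k))
       in norm (d k) \<le> \<delta> k
          \<and> m 0 - m (d k) \<ge> \<beta> * norm G * min_ratio (\<delta> k) (norm G) (mat_norm B)
          \<and> x (Suc k) = (if r < \<mu>1 then x k else x k + d k)
          \<and> \<delta> (Suc k) = (if r < \<mu>1 then c1 * \<delta> k
                          else if r < \<mu>2 then c2 * \<delta> k else c3 * \<delta> k))"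
  shows "(\<lambda>k. norm (grad (fbe \<gamma> f gf g) (x k))) \<longlonglongrightarrow> 0"
proof -
  interpret forward_backward f gf Hf g Lf \<rho> \<gamma>
    using f_C2 f_lip g_proper g_lsc g_wc argmin_ne gamma by unfold_locales
  show ?thesis
  proof (cases "\<exists>k. resid \<gamma> gf g (x k) = 0 \<and> lambda_min (Bmat \<gamma> Hf (P k) (x k)) \<ge> 0")
    case True
    then obtain k0 where k0: "resid \<gamma> gf g (x k0) = 0" and stays: "\<forall>j\<ge>k0. x j = x k0"
      using stopped by blast
    have "norm (grad (fbe \<gamma> f gf g) (x j)) = 0" if "k0 \<le> j" for j
    proof -
      from stays that have "x j = x k0" by blast
      with grad_fbe_eq_0[OF k0] show ?thesis by simp
    qed
    then show ?thesis by (intro tendsto_eventually eventually_sequentiallyI)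
  next
    case False
    let ?m = "\<lambda>k. tr_model (fbe \<gamma> f gf g (x k)) (grad (fbe \<gamma> f gf g) (x k)) (Bmat \<gamma> Hf (P k) (x k))"
    have "trust_region (fbe \<gamma> f gf g) (grad (fbe \<gamma> f gf g)) (\<lambda>k. Bmat \<gamma> Hf (P k) (x k)) x d \<delta>
        (\<lambda>k. ?m k 0 - ?m k (d k))
        (\<lambda>k. (fbe \<gamma> f gf g (x k) - fbe \<gamma> f gf g (x k + d k)) / (?m k 0 - ?m k (d k)))
        \<mu>1 \<mu>2 c1 c2 c3 \<beta>"
      using step False delta0 mu cs beta by unfold_locales (auto simp: Let_def)
    then show ?thesis using level_bdd P_sel[rule_format] by (rule trust_region_fbe_grad_tendsto_zero)
  qed
qed

end
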